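(* Let $[X,d,m]$ be a metric random walk space with invariant and reversible probability measure $\nu$, and assume $\Delta_m$ is ergodic. Then $${\rm gap}(-\Delta_m)=\sup\Big\{\lambda\ge0:\ \lambda\,\mathcal H_m(f)\le\int_X(-\Delta_m f)^2\,d\nu\ \ \text{for all } f\in L^2(X,\nu)\Big\}.$$
   Context: A metric random walk space $[X,d,m]$ is a Polish metric space $(X,d)$ with a family $m=(m_x)_{x\in X}$ of Borel probability measures, $x\mapsto m_x(A)$ Borel measurable, each with finite first moment. A Radon measure $\nu$ is invariant if $\nu(A)=\int_X m_x(A)d\nu(x)$ for all $\nu$-measurable $A$, reversible if $dm_x(y)d\nu(x)=dm_y(x)d\nu(y)$. $\Delta_m f(x)=\int_X(f(y)-f(x))dm_x(y)$; $\Delta_m$ is ergodic if $\Delta_m u=0$ implies $u$ is $\nu$-a.e. constant. $\mathcal H_m(f)=\frac12\iint(f(y)-f(x))^2dm_x(y)d\nu(x)$; ${\rm Var}_\nu(f)=\int_X(f-\int fd\nu)^2d\nu$; ${\rm gap}(-\Delta_m)=\inf\{\mathcal H_m(f)/{\rm Var}_\nu(f): f\in L^2(X,\nu),\ {\rm Var}_\nu(f)\ne0\}$. *)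

theory Defs
  imports "HOL-Probability.Probability"
begin

text \<open>A metric random walk space [X,d,m]: X is the (Polish) type 'a, d = dist,
  m x a Borel probability measure for each x, with x \<mapsto> m x A Borel measurable
  and each m x having finite first moment.\<close>
definition mrw_space :: "('a::polish_space \<Rightarrow> 'a measure) \<Rightarrow> bool" where
  "mrw_space m \<longleftrightarrow>
     (\<forall>x. prob_space (m x) \<and> sets (m x) = sets borel) \<and>
     (\<forall>A\<in>sets borel. (\<lambda>x. emeasure (m x) A) \<in> borel_measurable borel) \<and>
     (\<forall>x. integrable (m x) (\<lambda>y. dist x y))"

definition invariant_measure :: "('a::polish_space \<Rightarrow> 'a measure) \<Rightarrow> 'a measure \<Rightarrow> bool" where
  "invariant_measure m \<nu> \<longleftrightarrow> sets \<nu> = sets borel \<and>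
     (\<forall>A\<in>sets borel. emeasure \<nu> A = (\<integral>\<^sup>+x. emeasure (m x) A \<partial>\<nu>))"

text \<open>Reversibility dm_x(y)d\<nu>(x) = dm_y(x)d\<nu>(y), tested on measurable rectangles A \<times> B.\<close>
definition reversible_measure :: "('a::polish_space \<Rightarrow> 'a measure) \<Rightarrow> 'a measure \<Rightarrow> bool" where
  "reversible_measure m \<nu> \<longleftrightarrow> sets \<nu> = sets borel \<and>
     (\<forall>A\<in>sets borel. \<forall>B\<in>sets borel.
        (\<integral>\<^sup>+x. indicator A x * emeasure (m x) B \<partial>\<nu>) =
        (\<integral>\<^sup>+x. indicator B x * emeasure (m x) A \<partial>\<nu>))"

definition L2 :: "'a::polish_space measure \<Rightarrow> ('a \<Rightarrow> real) \<Rightarrow> bool" where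
  "L2 \<nu> f \<longleftrightarrow> f \<in> borel_measurable \<nu> \<and> integrable \<nu> (\<lambda>x. (f x)^2)"

definition laplacian_m :: "('a::polish_space \<Rightarrow> 'a measure) \<Rightarrow> ('a \<Rightarrow> real) \<Rightarrow> 'a \<Rightarrow> real" where
  "laplacian_m m f x = (\<integral>y. (f y - f x) \<partial>(m x))"

definition ergodic :: "('a::polish_space \<Rightarrow> 'a measure) \<Rightarrow> 'a measure \<Rightarrow> bool" where
  "ergodic m \<nu> \<longleftrightarrow> (\<forall>u. L2 \<nu> u \<and> (AE x in \<nu>. laplacian_m m u x = 0) \<longrightarrow>
                        (\<exists>c. AE x in \<nu>. u x = c))"

definition H_m :: "('a::polish_space \<Rightarrow> 'a measure) \<Rightarrow> 'a measure \<Rightarrow> ('a \<Rightarrow> real) \<Rightarrow> real" where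
  "H_m m \<nu> f = 1/2 * (\<integral>x. (\<integral>y. (f y - f x)^2 \<partial>(m x)) \<partial>\<nu>)"

definition Var_nu :: "'a::polish_space measure \<Rightarrow> ('a \<Rightarrow> real) \<Rightarrow> real" where
  "Var_nu \<nu> f = (\<integral>x. (f x - (\<integral>y. f y \<partial>\<nu>))^2 \<partial>\<nu>)"

text \<open>Spectral gap, valued in extended reals (inf of the empty set = +\<infinity>).\<close>
definition gap :: "('a::polish_space \<Rightarrow> 'a measure) \<Rightarrow> 'a measure \<Rightarrow> ereal" where
  "gap m \<nu> = Inf {ereal (H_m m \<nu> f / Var_nu \<nu> f) | f. L2 \<nu> f \<and> Var_nu \<nu> f \<noteq> 0}"

end

theory Submission
  imports Defs
begin

text \<open>
  Write \<open>M u x = \<integral> u dm\<^sub>x\<close> for the Markov operator, so that \<open>-\<Delta>\<^sub>m = I - M\<close>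
  and \<open>H\<^sub>m(f) = \<langle>-\<Delta>\<^sub>m f, f\<rangle>\<close>; reversibility makes \<open>M\<close> a self-adjoint
  contraction of \<open>L\<^sup>2(\<nu>)\<close>.

  If \<open>\<lambda> Var(f) \<le> H\<^sub>m(f)\<close> for all \<open>f\<close>, then since \<open>-\<Delta>\<^sub>m f\<close> has mean zero, Cauchy-Schwarz
  gives \<open>H\<^sub>m(f)\<^sup>2 \<le> Var(f) \<parallel>\<Delta>\<^sub>m f\<parallel>\<^sup>2 \<le> H\<^sub>m(f) \<parallel>\<Delta>\<^sub>m f\<parallel>\<^sup>2 / \<lambda>\<close>.

  Conversely, let \<open>\<lambda> H\<^sub>m(k) \<le> \<parallel>\<Delta>\<^sub>m k\<parallel>\<^sup>2\<close> for all \<open>k\<close>. For \<open>d = -\<Delta>\<^sub>m k\<close> the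
  Dirichlet form gives \<open>H\<^sub>m(k, d) = \<parallel>d\<parallel>\<^sup>2\<close>, and its Cauchy-Schwarz inequality yields
  \<open>\<lambda> \<parallel>d\<parallel>\<^sup>2 \<le> H\<^sub>m(d)\<close>. For centred \<open>g\<close> and the lazy walk \<open>T = (I + M)/2\<close>, the
  functions \<open>g - T\<^sup>n g = -\<Delta>\<^sub>m (\<Sum>\<^sub>i\<^sub><\<^sub>n T\<^sup>i g / 2)\<close> are of this form. Moreover
  \<open>T\<^sup>n g \<rightarrow> 0\<close> in \<open>L\<^sup>2\<close>: the correlations \<open>\<langle>g, T\<^sup>n g\<rangle>\<close> decrease because \<open>T\<close> is a
  positive contraction, so \<open>T\<^sup>n g\<close> is Cauchy; its limit is harmonic, hence constant by
  ergodicity, hence zero. Letting \<open>n \<rightarrow> \<infinity>\<close> gives \<open>\<lambda> Var(g) \<le> H\<^sub>m(g)\<close>.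
\<close>

lemma discriminant_le_of_quadratic_nonneg:
  fixes A B C :: real
  assumes nonneg: "\<And>t. 0 \<le> A - 2 * t * B + t\<^sup>2 * C" and "0 \<le> C"
  shows "B\<^sup>2 \<le> A * C"
proof (cases "C = 0")
  case True
  show ?thesis
  proof (rule ccontr)
    assume "\<not> ?thesis"
    then have "B \<noteq> 0" using True by simp
    then have "A - 2 * ((A + 1) / (2 * B)) * B = -1" by (simp add: field_simps)
    with nonneg[of "(A + 1) / (2 * B)"] True show False by simp
  qed
next
  case False
  with \<open>0 \<le> C\<close> have "0 < C" by simp
  have "0 \<le> A - 2 * (B / C) * B + (B / C)\<^sup>2 * C" by (rule nonneg)
  also have "\<dots> = A - B\<^sup>2 / C" using \<open>0 < C\<close> by (simp add: power2_eq_square field_simps)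
  finally show ?thesis using \<open>0 < C\<close> by (simp add: field_simps)
qed

lemma mult_le_of_square_le_mult:
  fixes a p q l :: real
  assumes "0 \<le> a" "0 \<le> q" "0 \<le> l" and "a\<^sup>2 \<le> p * q" and "l * p \<le> a"
  shows "l * a \<le> q"
proof (cases "a = 0")
  case False
  have "a * (l * a) = l * a\<^sup>2" by (simp add: power2_eq_square)
  also have "\<dots> \<le> l * (p * q)" using assms by (intro mult_left_mono) auto
  also have "\<dots> = (l * p) * q" by simp
  also have "\<dots> \<le> a * q" using assms by (intro mult_right_mono) auto
  finally have "a * (l * a) \<le> a * q" .
  then show ?thesis by (rule mult_left_le_imp_le) (use False \<open>0 \<le> a\<close> in simp)
qed (use assms in simp)

lemma tendsto_0_if_square_le:
  fixes X Y :: "nat \<Rightarrow> real"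
  assumes "\<And>k. (X k)\<^sup>2 \<le> Y k * C" and "Y \<longlonglongrightarrow> 0"
  shows "X \<longlonglongrightarrow> 0"
proof -
  have "(\<lambda>k. (X k)\<^sup>2) \<longlonglongrightarrow> 0"
    by (rule tendsto_sandwich[OF _ _ tendsto_const tendsto_mult_left_zero[OF assms(2), of C]])
      (use assms(1) in auto)
  then have "(\<lambda>k. sqrt ((X k)\<^sup>2)) \<longlonglongrightarrow> sqrt 0" by (rule tendsto_real_sqrt)
  then show ?thesis by (simp add: tendsto_rabs_zero_iff)
qed

lemma Sup_nonneg_reals_le:
  assumes "0 \<le> g"
  shows "Sup {ereal l |l. 0 \<le> l \<and> ereal l \<le> g} = g"
proof (rule antisym)
  let ?S = "{ereal l |l. 0 \<le> l \<and> ereal l \<le> g}"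
  show "Sup ?S \<le> g" by (rule Sup_least) auto
  have upper: "ereal l \<le> Sup ?S" if "0 \<le> l" "ereal l \<le> g" for l
    using that by (intro Sup_upper) blast
  show "g \<le> Sup ?S"
  proof (cases g)
    case (real r)
    then show ?thesis using assms upper[of r] by simp
  next
    case PInf
    have "ereal B \<le> Sup ?S" for B
    proof -
      have "ereal B \<le> ereal (max B 0)" by simp
      also have "\<dots> \<le> Sup ?S" by (rule upper) (simp_all add: PInf)
      finally show ?thesis .
    qed
    then have "Sup ?S = \<infinity>" by (rule ereal_top)
    with PInf show ?thesis by simp
  qed (use assms in simp)
qed

lemma integrable_mult_square_integrable:
  fixes f g :: "'a \<Rightarrow> real"
  assumes [measurable]: "f \<in> borel_measurable M" "g \<in> borel_measurable M"
    and "integrable M (\<lambda>x. (f x)\<^sup>2)" "integrable M (\<lambda>x. (g x)\<^sup>2)"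
  shows "integrable M (\<lambda>x. f x * g x)"
proof (rule Bochner_Integration.integrable_bound)
  show "integrable M (\<lambda>x. (f x)\<^sup>2 + (g x)\<^sup>2)" using assms by simp
  have "\<bar>a * b\<bar> \<le> a\<^sup>2 + b\<^sup>2" for a b :: real
  proof -
    have "0 \<le> \<bar>a\<bar> * \<bar>b\<bar>" by simp
    moreover have "2 * (\<bar>a\<bar> * \<bar>b\<bar>) \<le> a\<^sup>2 + b\<^sup>2"
      using sum_squares_bound[of "\<bar>a\<bar>" "\<bar>b\<bar>"] by (simp add: mult.assoc)
    ultimately show ?thesis unfolding abs_mult by linarith
  qed
  then show "AE x in M. norm (f x * g x) \<le> norm ((f x)\<^sup>2 + (g x)\<^sup>2)" by simp
qed simp

lemma integrable_square_lin_comb: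
  fixes f g :: "'a \<Rightarrow> real"
  assumes [measurable]: "f \<in> borel_measurable M" "g \<in> borel_measurable M"
    and "integrable M (\<lambda>x. (f x)\<^sup>2)" "integrable M (\<lambda>x. (g x)\<^sup>2)"
  shows "integrable M (\<lambda>x. (a * f x + b * g x)\<^sup>2)"
proof -
  have "integrable M (\<lambda>x. a\<^sup>2 * (f x)\<^sup>2 + (2 * a * b) * (f x * g x) + b\<^sup>2 * (g x)\<^sup>2)"
    using assms integrable_mult_square_integrable[OF assms] by simp
  then show ?thesis by (simp add: power2_eq_square algebra_simps)
qed

lemma Cauchy_Schwarz_integral:
  fixes f g :: "'a \<Rightarrow> real"
  assumes [measurable]: "f \<in> borel_measurable M" "g \<in> borel_measurable M"
    and "integrable M (\<lambda>x. (f x)\<^sup>2)" "integrable M (\<lambda>x. (g x)\<^sup>2)"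
  shows "(\<integral>x. f x * g x \<partial>M)\<^sup>2 \<le> (\<integral>x. (f x)\<^sup>2 \<partial>M) * (\<integral>x. (g x)\<^sup>2 \<partial>M)"
proof (rule discriminant_le_of_quadratic_nonneg)
  fix t :: real
  have "0 \<le> (\<integral>x. (f x - t * g x)\<^sup>2 \<partial>M)" by simp
  also have "\<dots> = (\<integral>x. (f x)\<^sup>2 - 2 * t * (f x * g x) + t\<^sup>2 * (g x)\<^sup>2 \<partial>M)"
    by (simp add: power2_eq_square algebra_simps)
  also have "\<dots> = (\<integral>x. (f x)\<^sup>2 \<partial>M) - 2 * t * (\<integral>x. f x * g x \<partial>M) + t\<^sup>2 * (\<integral>x. (g x)\<^sup>2 \<partial>M)"
    using assms integrable_mult_square_integrable[OF assms] by simp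
  finally show "0 \<le> (\<integral>x. (f x)\<^sup>2 \<partial>M) - 2 * t * (\<integral>x. f x * g x \<partial>M) + t\<^sup>2 * (\<integral>x. (g x)\<^sup>2 \<partial>M)" .
qed simp

lemma (in prob_space) square_expectation_le:
  fixes f :: "'a \<Rightarrow> real"
  assumes "f \<in> borel_measurable M" "integrable M (\<lambda>x. (f x)\<^sup>2)"
  shows "(\<integral>x. f x \<partial>M)\<^sup>2 \<le> (\<integral>x. (f x)\<^sup>2 \<partial>M)"
  using variance_positive[of f] variance_eq[of f] square_integrable_imp_integrable[OF assms] assms(2)
  by simp

lemma (in finite_measure) L1_Cauchy_if_square_Cauchy:
  fixes s :: "nat \<Rightarrow> 'a \<Rightarrow> real"
  assumes [measurable]: "\<And>n. s n \<in> borel_measurable M"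
    and diff_sq: "\<And>i j. integrable M (\<lambda>x. (s i x - s j x)\<^sup>2)"
    and Cauchy: "\<And>e. 0 < e \<Longrightarrow> \<exists>N. \<forall>i\<ge>N. \<forall>j\<ge>N. (\<integral>x. (s i x - s j x)\<^sup>2 \<partial>M) < e"
    and "0 < e"
  shows "\<exists>N. \<forall>i\<ge>N. \<forall>j\<ge>N. (\<integral>x. norm (s i x - s j x) \<partial>M) < e"
proof -
  define C where "C = measure M (space M)"
  have "0 \<le> C" by (simp add: C_def)
  obtain N where N: "\<And>i j. N \<le> i \<Longrightarrow> N \<le> j \<Longrightarrow> (\<integral>x. (s i x - s j x)\<^sup>2 \<partial>M) < e\<^sup>2 / (C + 1)"
    using Cauchy[of "e\<^sup>2 / (C + 1)"] \<open>0 < e\<close> \<open>0 \<le> C\<close> by fastforce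
  have "(\<integral>x. norm (s i x - s j x) \<partial>M) < e" if "N \<le> i" "N \<le> j" for i j
  proof -
    have "(\<integral>x. \<bar>s i x - s j x\<bar> * 1 \<partial>M)\<^sup>2 \<le> (\<integral>x. \<bar>s i x - s j x\<bar>\<^sup>2 \<partial>M) * (\<integral>x. 1\<^sup>2 \<partial>M)"
      by (rule Cauchy_Schwarz_integral) (use diff_sq in auto)
    also have "\<dots> = (\<integral>x. (s i x - s j x)\<^sup>2 \<partial>M) * C" by (simp add: C_def)
    also have "\<dots> \<le> e\<^sup>2 / (C + 1) * C"
      using N[OF that] \<open>0 \<le> C\<close> by (intro mult_right_mono) auto
    also have "\<dots> < e\<^sup>2" using \<open>0 < e\<close> \<open>0 \<le> C\<close> by (simp add: field_simps)
    finally show ?thesis using \<open>0 < e\<close> by (simp add: power_less_imp_less_base)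
  qed
  then show ?thesis by blast
qed

text \<open>Fatou's lemma for the \<open>L\<^sup>2\<close> distance to an almost everywhere limit.\<close>
lemma
  fixes f u :: "'a \<Rightarrow> real" and t :: "nat \<Rightarrow> 'a \<Rightarrow> real"
  assumes [measurable]: "f \<in> borel_measurable M" "u \<in> borel_measurable M" "\<And>j. t j \<in> borel_measurable M"
    and lim: "AE x in M. (\<lambda>j. t j x) \<longlonglongrightarrow> u x"
    and bound: "\<forall>\<^sub>F j in sequentially. integrable M (\<lambda>x. (f x - t j x)\<^sup>2) \<and> (\<integral>x. (f x - t j x)\<^sup>2 \<partial>M) \<le> e"
  shows integrable_square_diff_AE_limit: "integrable M (\<lambda>x. (f x - u x)\<^sup>2)"
    and integral_square_diff_AE_limit_le: "(\<integral>x. (f x - u x)\<^sup>2 \<partial>M) \<le> e"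
proof -
  have "(\<integral>\<^sup>+x. ennreal ((f x - u x)\<^sup>2) \<partial>M) = (\<integral>\<^sup>+x. liminf (\<lambda>j. ennreal ((f x - t j x)\<^sup>2)) \<partial>M)"
    using lim
  proof (intro nn_integral_cong_AE, eventually_elim)
    case (elim x)
    then have "(\<lambda>j. ennreal ((f x - t j x)\<^sup>2)) \<longlonglongrightarrow> ennreal ((f x - u x)\<^sup>2)"
      by (intro tendsto_ennrealI tendsto_intros)
    then show ?case by (metis lim_imp_Liminf trivial_limit_sequentially)
  qed
  also have "\<dots> \<le> liminf (\<lambda>j. \<integral>\<^sup>+x. ennreal ((f x - t j x)\<^sup>2) \<partial>M)"
    by (rule nn_integral_liminf) simp
  also have "\<dots> \<le> liminf (\<lambda>j. ennreal e)"
  proof (rule Liminf_mono)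
    show "\<forall>\<^sub>F j in sequentially. (\<integral>\<^sup>+x. ennreal ((f x - t j x)\<^sup>2) \<partial>M) \<le> ennreal e"
      using bound by eventually_elim (simp add: nn_integral_eq_integral ennreal_leI)
  qed
  also have "\<dots> = ennreal e" by (simp add: Liminf_const)
  finally have nn_bound: "(\<integral>\<^sup>+x. ennreal ((f x - u x)\<^sup>2) \<partial>M) \<le> ennreal e" .
  then show "integrable M (\<lambda>x. (f x - u x)\<^sup>2)"
    by (intro integrableI_nonneg) (auto simp: top_unique intro: le_less_trans)
  obtain j where "(\<integral>x. (f x - t j x)\<^sup>2 \<partial>M) \<le> e"
    using eventually_happens'[OF trivial_limit_sequentially bound] by blast
  moreover have "0 \<le> (\<integral>x. (f x - t j x)\<^sup>2 \<partial>M)" by simp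
  ultimately have "0 \<le> e" by linarith
  then show "(\<integral>x. (f x - u x)\<^sup>2 \<partial>M) \<le> e"
    using nn_bound by (simp add: integral_eq_nn_integral enn2real_leI)
qed

lemma (in finite_measure) square_integrable_Cauchy_converges:
  fixes s :: "nat \<Rightarrow> 'a \<Rightarrow> real"
  assumes meas[measurable]: "\<And>n. s n \<in> borel_measurable M"
    and sq: "\<And>n. integrable M (\<lambda>x. (s n x)\<^sup>2)"
    and Cauchy: "\<And>e. 0 < e \<Longrightarrow> \<exists>N. \<forall>i\<ge>N. \<forall>j\<ge>N. (\<integral>x. (s i x - s j x)\<^sup>2 \<partial>M) < e"
  obtains u where "u \<in> borel_measurable M" "integrable M (\<lambda>x. (u x)\<^sup>2)"
    "(\<lambda>n. \<integral>x. (s n x - u x)\<^sup>2 \<partial>M) \<longlonglongrightarrow> 0"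
proof -
  have diff_sq: "integrable M (\<lambda>x. (s i x - s j x)\<^sup>2)" for i j
    using integrable_square_lin_comb[OF meas meas sq sq, of 1 i "-1" j] by simp
  have L1_Cauchy: "\<exists>N. \<forall>i\<ge>N. \<forall>j\<ge>N. (\<integral>x. norm (s i x - s j x) \<partial>M) < e" if "0 < e" for e
    by (rule L1_Cauchy_if_square_Cauchy[OF meas diff_sq Cauchy that])
  obtain r where "strict_mono r" and Cauchy_ae: "AE x in M. Cauchy (\<lambda>i. s (r i) x)"
    using cauchy_L1_AE_cauchy_subseq[OF square_integrable_imp_integrable[OF meas sq] L1_Cauchy]
    by blast
  define u where "u x = lim (\<lambda>i. s (r i) x)" for x
  have u_meas[measurable]: "u \<in> borel_measurable M" unfolding u_def by measurable
  have lim_ae: "AE x in M. (\<lambda>i. s (r i) x) \<longlonglongrightarrow> u x"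
    using Cauchy_ae by eventually_elim (simp add: u_def Cauchy_convergent_iff convergent_LIMSEQ_iff)
  have close: "integrable M (\<lambda>x. (s n x - u x)\<^sup>2) \<and> (\<integral>x. (s n x - u x)\<^sup>2 \<partial>M) \<le> e"
    if N: "\<And>i j. N \<le> i \<Longrightarrow> N \<le> j \<Longrightarrow> (\<integral>x. (s i x - s j x)\<^sup>2 \<partial>M) < e" and "N \<le> n" for n N e
  proof -
    have "\<forall>\<^sub>F j in sequentially. integrable M (\<lambda>x. (s n x - s (r j) x)\<^sup>2)
        \<and> (\<integral>x. (s n x - s (r j) x)\<^sup>2 \<partial>M) \<le> e"
    proof (intro eventually_sequentiallyI conjI)
      fix j assume "N \<le> j"
      then have "N \<le> r j" using seq_suble[OF \<open>strict_mono r\<close>, of j] by simp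
      then show "(\<integral>x. (s n x - s (r j) x)\<^sup>2 \<partial>M) \<le> e" using N[OF \<open>N \<le> n\<close>] by fastforce
    qed (rule diff_sq)
    from integrable_square_diff_AE_limit[OF _ _ _ lim_ae this]
      integral_square_diff_AE_limit_le[OF _ _ _ lim_ae this]
    show ?thesis by simp
  qed
  obtain N1 where N1: "\<And>i j. N1 \<le> i \<Longrightarrow> N1 \<le> j \<Longrightarrow> (\<integral>x. (s i x - s j x)\<^sup>2 \<partial>M) < 1"
    using Cauchy[of 1] by auto
  have "integrable M (\<lambda>x. (s N1 x - u x)\<^sup>2)"
    using close[OF N1 order.refl] by simp
  then have "integrable M (\<lambda>x. (1 * s N1 x + (-1) * (s N1 x - u x))\<^sup>2)"
    by (intro integrable_square_lin_comb sq) auto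
  then have "integrable M (\<lambda>x. (u x)\<^sup>2)" by simp
  moreover have "(\<lambda>n. \<integral>x. (s n x - u x)\<^sup>2 \<partial>M) \<longlonglongrightarrow> 0"
  proof (rule LIMSEQ_I)
    fix e :: real assume "0 < e"
    then obtain N where N: "\<And>i j. N \<le> i \<Longrightarrow> N \<le> j \<Longrightarrow> (\<integral>x. (s i x - s j x)\<^sup>2 \<partial>M) < e / 2"
      using Cauchy[of "e / 2"] by auto
    have "\<bar>\<integral>x. (s n x - u x)\<^sup>2 \<partial>M\<bar> < e" if "N \<le> n" for n
      using close[OF N that] \<open>0 < e\<close> by simp
    then show "\<exists>N. \<forall>n\<ge>N. norm ((\<integral>x. (s n x - u x)\<^sup>2 \<partial>M) - 0) < e" by auto
  qed
  ultimately show ?thesis by (rule that[OF u_meas])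
qed

section \<open>Integration against a kernel\<close>

lemma AE_integrable_bind_kernel:
  fixes h :: "'b \<Rightarrow> real"
  assumes N[measurable]: "N \<in> M \<rightarrow>\<^sub>M subprob_algebra K" and "space M \<noteq> {}"
    and h: "integrable (M \<bind> N) h"
  shows "AE x in M. integrable (N x) h"
proof -
  have [measurable_cong]: "sets (M \<bind> N) = sets K"
    by (rule sets_bind_measurable[OF N \<open>space M \<noteq> {}\<close>])
  have [measurable]: "h \<in> borel_measurable K"
    using borel_measurable_integrable[OF h] by (simp cong: measurable_cong_sets)
  have h_Nx: "h \<in> borel_measurable (N x)" if "x \<in> space M" for x
    using sets_kernel[OF N that] by (simp cong: measurable_cong_sets)
  have "(\<integral>\<^sup>+x. (\<integral>\<^sup>+y. ennreal (norm (h y)) \<partial>N x) \<partial>M) < \<infinity>"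
    using h by (simp add: integrable_iff_bounded nn_integral_bind[OF _ N])
  then have "AE x in M. (\<integral>\<^sup>+y. ennreal (norm (h y)) \<partial>N x) < \<infinity>"
    by (intro finite_nn_integral_imp_ae_finite) measurable
  then show ?thesis by (auto simp: integrable_iff_bounded h_Nx)
qed

lemma
  fixes f :: "'b \<Rightarrow> ennreal"
  assumes N[measurable]: "N \<in> M \<rightarrow>\<^sub>M subprob_algebra K" and [measurable]: "f \<in> borel_measurable K"
    and finite: "(\<integral>\<^sup>+y. f y \<partial>(M \<bind> N)) < \<infinity>"
  shows integrable_enn2real_nn_integral_kernel: "integrable M (\<lambda>x. enn2real (\<integral>\<^sup>+y. f y \<partial>N x))"
    and integral_enn2real_nn_integral_kernel:
      "(\<integral>x. enn2real (\<integral>\<^sup>+y. f y \<partial>N x) \<partial>M) = enn2real (\<integral>\<^sup>+y. f y \<partial>(M \<bind> N))"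
proof -
  have bind_eq: "(\<integral>\<^sup>+y. f y \<partial>(M \<bind> N)) = (\<integral>\<^sup>+x. (\<integral>\<^sup>+y. f y \<partial>N x) \<partial>M)"
    by (rule nn_integral_bind[OF _ N]) simp
  have "AE x in M. (\<integral>\<^sup>+y. f y \<partial>N x) < \<infinity>"
    using finite by (intro finite_nn_integral_imp_ae_finite) (simp_all add: bind_eq)
  then have eq: "(\<integral>\<^sup>+x. ennreal (enn2real (\<integral>\<^sup>+y. f y \<partial>N x)) \<partial>M) = (\<integral>\<^sup>+y. f y \<partial>(M \<bind> N))"
    unfolding bind_eq by (intro nn_integral_cong_AE) (auto simp: less_top)
  show "integrable M (\<lambda>x. enn2real (\<integral>\<^sup>+y. f y \<partial>N x))"
    using eq finite by (intro integrableI_nonneg) auto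
  show "(\<integral>x. enn2real (\<integral>\<^sup>+y. f y \<partial>N x) \<partial>M) = enn2real (\<integral>\<^sup>+y. f y \<partial>(M \<bind> N))"
    by (subst integral_eq_nn_integral) (auto simp: eq)
qed

lemma
  fixes h :: "'b \<Rightarrow> real"
  assumes N[measurable]: "N \<in> M \<rightarrow>\<^sub>M subprob_algebra K" and "space M \<noteq> {}"
    and h: "integrable (M \<bind> N) h"
  shows integrable_integral_bind_kernel: "integrable M (\<lambda>x. \<integral>y. h y \<partial>N x)"
    and integral_bind_integrable: "(\<integral>y. h y \<partial>(M \<bind> N)) = (\<integral>x. (\<integral>y. h y \<partial>N x) \<partial>M)"
proof -
  have [measurable_cong]: "sets (M \<bind> N) = sets K"
    by (rule sets_bind_measurable[OF N \<open>space M \<noteq> {}\<close>])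
  have [measurable]: "h \<in> borel_measurable K"
    using borel_measurable_integrable[OF h] by (simp cong: measurable_cong_sets)
  let ?P = "\<lambda>x. enn2real (\<integral>\<^sup>+y. ennreal (h y) \<partial>N x)" and ?Q = "\<lambda>x. enn2real (\<integral>\<^sup>+y. ennreal (- h y) \<partial>N x)"
  have "(\<integral>\<^sup>+y. ennreal (h y) \<partial>(M \<bind> N)) \<le> (\<integral>\<^sup>+y. ennreal (norm (h y)) \<partial>(M \<bind> N))"
    "(\<integral>\<^sup>+y. ennreal (- h y) \<partial>(M \<bind> N)) \<le> (\<integral>\<^sup>+y. ennreal (norm (h y)) \<partial>(M \<bind> N))"
    by (intro nn_integral_mono ennreal_leI; simp)+
  then have "(\<integral>\<^sup>+y. ennreal (h y) \<partial>(M \<bind> N)) < \<infinity>" "(\<integral>\<^sup>+y. ennreal (- h y) \<partial>(M \<bind> N)) < \<infinity>"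
    using h by (auto simp: integrable_iff_bounded intro: le_less_trans)
  note P = integrable_enn2real_nn_integral_kernel[OF N _ this(1)] integral_enn2real_nn_integral_kernel[OF N _ this(1)]
    and Q = integrable_enn2real_nn_integral_kernel[OF N _ this(2)] integral_enn2real_nn_integral_kernel[OF N _ this(2)]
  have split_ae: "AE x in M. (\<integral>y. h y \<partial>N x) = ?P x - ?Q x"
    using AE_integrable_bind_kernel[OF N \<open>space M \<noteq> {}\<close> h]
    by eventually_elim (simp add: real_lebesgue_integral_def)
  have [measurable]: "(\<lambda>x. \<integral>y. h y \<partial>N x) \<in> borel_measurable M" by measurable
  show "integrable M (\<lambda>x. \<integral>y. h y \<partial>N x)"
    using integrable_cong_AE[OF _ _ split_ae] P Q by simp
  have "(\<integral>x. (\<integral>y. h y \<partial>N x) \<partial>M) = (\<integral>x. ?P x \<partial>M) - (\<integral>x. ?Q x \<partial>M)"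
    using integral_cong_AE[OF _ _ split_ae] P Q by simp
  also have "\<dots> = (\<integral>y. h y \<partial>(M \<bind> N))"
    using P Q by (simp add: real_lebesgue_integral_def[OF h])
  finally show "(\<integral>y. h y \<partial>(M \<bind> N)) = (\<integral>x. (\<integral>y. h y \<partial>N x) \<partial>M)" ..
qed

locale reversible_random_walk =
  fixes m :: "'a::polish_space \<Rightarrow> 'a measure" and \<nu> :: "'a measure"
  assumes mrw_space: "mrw_space m" and prob_space_nu: "prob_space \<nu>"
    and invariant: "invariant_measure m \<nu>" and reversible: "reversible_measure m \<nu>"
begin

lemma sets_nu[measurable_cong]: "sets \<nu> = sets borel"
  using invariant by (simp add: invariant_measure_def)

lemma space_nu[simp]: "space \<nu> = UNIV"
  using sets_eq_imp_space_eq[OF sets_nu] by simp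

lemma prob_space_m: "prob_space (m x)" and sets_m[measurable_cong]: "sets (m x) = sets borel"
  using mrw_space by (auto simp: mrw_space_def)

lemma space_m[simp]: "space (m x) = UNIV"
  using sets_eq_imp_space_eq[OF sets_m] by simp

lemma measurable_kernel[measurable]: "m \<in> \<nu> \<rightarrow>\<^sub>M prob_algebra borel"
proof -
  have "m \<in> borel \<rightarrow>\<^sub>M subprob_algebra borel"
    using mrw_space prob_space_m
    by (intro measurable_subprob_algebra) (auto simp: mrw_space_def prob_space_imp_subprob_space)
  then have "m \<in> borel \<rightarrow>\<^sub>M prob_algebra borel"
    using prob_space_m by (intro measurable_prob_algebraI) auto
  then show ?thesis by (simp cong: measurable_cong_sets)
qed

lemma measurable_kernel_subprob[measurable]: "m \<in> \<nu> \<rightarrow>\<^sub>M subprob_algebra borel"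
  by (rule measurable_prob_algebraD[OF measurable_kernel])

section \<open>The edge measure\<close>

text \<open>The measure \<open>dm\<^sub>x(y) d\<nu>(x)\<close> on pairs \<open>(x, y)\<close>; reversibility says that it is symmetric.\<close>
definition edge_measure :: "('a \<times> 'a) measure" where
  "edge_measure = \<nu> \<bind> (\<lambda>x. distr (m x) (borel \<Otimes>\<^sub>M borel) (Pair x))"

lemma measurable_edge_kernel:
  "(\<lambda>x. distr (m x) (borel \<Otimes>\<^sub>M borel) (Pair x)) \<in> \<nu> \<rightarrow>\<^sub>M subprob_algebra (borel \<Otimes>\<^sub>M borel)"
  by (intro measurable_prob_algebraD measurable_distr_prob_space2[OF measurable_kernel]) simp

lemma sets_edge_measure[measurable_cong]: "sets edge_measure = sets (borel \<Otimes>\<^sub>M borel)"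
  unfolding edge_measure_def by (rule sets_bind_measurable[OF measurable_edge_kernel]) simp

lemma space_edge_measure[simp]: "space edge_measure = UNIV"
  using sets_eq_imp_space_eq[OF sets_edge_measure] by (simp add: space_pair_measure)

lemma nn_integral_edge_measure:
  assumes [measurable]: "h \<in> borel_measurable (borel \<Otimes>\<^sub>M borel)"
  shows "(\<integral>\<^sup>+z. h z \<partial>edge_measure) = (\<integral>\<^sup>+x. (\<integral>\<^sup>+y. h (x, y) \<partial>m x) \<partial>\<nu>)"
  unfolding edge_measure_def nn_integral_bind[OF assms measurable_edge_kernel]
  by (intro nn_integral_cong) (simp add: nn_integral_distr)

lemma emeasure_edge_measure_Times:
  assumes [measurable]: "A \<in> sets borel" "B \<in> sets borel"
  shows "emeasure edge_measure (A \<times> B) = (\<integral>\<^sup>+x. indicator A x * emeasure (m x) B \<partial>\<nu>)"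
proof -
  have "emeasure edge_measure (A \<times> B) = (\<integral>\<^sup>+z. indicator (A \<times> B) z \<partial>edge_measure)"
    by (simp add: sets_edge_measure)
  also have "\<dots> = (\<integral>\<^sup>+x. indicator A x * emeasure (m x) B \<partial>\<nu>)"
    by (subst nn_integral_edge_measure) (auto intro!: nn_integral_cong
        simp: indicator_times nn_integral_cmult sets_m)
  finally show ?thesis .
qed

lemma emeasure_edge_measure_space: "emeasure edge_measure UNIV = 1"
  using emeasure_edge_measure_Times[of UNIV UNIV] prob_space.emeasure_space_1[OF prob_space_m]
    prob_space.emeasure_space_1[OF prob_space_nu]
  by simp

lemma distr_edge_measure_swap: "distr edge_measure (borel \<Otimes>\<^sub>M borel) (\<lambda>(x, y). (y, x)) = edge_measure"
proof (rule measure_eqI_generator_eq_countable[OF Int_stable_pair_measure_generator, where A="{UNIV}"])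
  fix X assume "X \<in> {a \<times> b |a b. a \<in> sets (borel :: 'a measure) \<and> b \<in> sets (borel :: 'a measure)}"
  then obtain A B where X: "X = A \<times> B" and [measurable]: "A \<in> sets borel" "B \<in> sets borel" by auto
  have "(\<lambda>(x, y). (y, x)) -` (A \<times> B) \<inter> space edge_measure = B \<times> A" by auto
  then have "emeasure (distr edge_measure (borel \<Otimes>\<^sub>M borel) (\<lambda>(x, y). (y, x))) X
      = emeasure edge_measure (B \<times> A)"
    by (simp add: X emeasure_distr measurable_cong_sets[OF sets_edge_measure refl])
  also have "\<dots> = emeasure edge_measure X"
    using reversible by (simp add: X emeasure_edge_measure_Times reversible_measure_def)
  finally show "emeasure (distr edge_measure (borel \<Otimes>\<^sub>M borel) (\<lambda>(x, y). (y, x))) X = emeasure edge_measure X" .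
next
  show "emeasure (distr edge_measure (borel \<Otimes>\<^sub>M borel) (\<lambda>(x, y). (y, x))) a \<noteq> \<infinity>" if "a \<in> {UNIV}" for a
    using that emeasure_edge_measure_space sets.top[of "borel \<Otimes>\<^sub>M (borel :: 'a measure)"]
    by (subst emeasure_distr) (auto simp: measurable_cong_sets[OF sets_edge_measure refl] space_pair_measure)
qed (auto simp: sets_pair_measure sets_edge_measure intro!: exI[of _ UNIV])

lemma distr_edge_measure_snd: "distr edge_measure borel snd = \<nu>"
proof (rule measure_eqI)
  fix A assume "A \<in> sets (distr edge_measure borel snd)"
  then have [measurable]: "A \<in> sets borel" by simp
  have "snd -` A \<inter> space edge_measure = UNIV \<times> A" by auto
  then have "emeasure (distr edge_measure borel snd) A = emeasure edge_measure (UNIV \<times> A)"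
    by (simp add: emeasure_distr measurable_cong_sets[OF sets_edge_measure refl])
  also have "\<dots> = emeasure \<nu> A"
    using invariant by (simp add: emeasure_edge_measure_Times invariant_measure_def)
  finally show "emeasure (distr edge_measure borel snd) A = emeasure \<nu> A" .
qed (simp add: sets_nu)

lemma distr_edge_measure_fst: "distr edge_measure borel fst = \<nu>"
proof -
  have "distr edge_measure borel fst = distr (distr edge_measure (borel \<Otimes>\<^sub>M borel) (\<lambda>(x, y). (y, x))) borel fst"
    by (simp add: distr_edge_measure_swap)
  also have "\<dots> = distr edge_measure borel snd"
    by (subst distr_distr) (auto simp: measurable_cong_sets[OF sets_edge_measure refl] comp_def case_prod_beta)
  finally show ?thesis by (simp add: distr_edge_measure_snd)
qed

lemma
  fixes h :: "'a \<times> 'a \<Rightarrow> real"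
  assumes h: "integrable edge_measure h"
  shows AE_integrable_edge_slice: "AE x in \<nu>. integrable (m x) (\<lambda>y. h (x, y))"
    and integrable_edge_slice_integral: "integrable \<nu> (\<lambda>x. \<integral>y. h (x, y) \<partial>m x)"
    and integral_edge_measure: "(\<integral>z. h z \<partial>edge_measure) = (\<integral>x. (\<integral>y. h (x, y) \<partial>m x) \<partial>\<nu>)"
proof -
  have [measurable]: "h \<in> borel_measurable (borel \<Otimes>\<^sub>M borel)"
    using borel_measurable_integrable[OF h] by (simp cong: measurable_cong_sets add: sets_edge_measure)
  have h': "integrable (\<nu> \<bind> (\<lambda>x. distr (m x) (borel \<Otimes>\<^sub>M borel) (Pair x))) h"
    using h by (simp add: edge_measure_def)
  have slice: "(\<integral>y. h y \<partial>distr (m x) (borel \<Otimes>\<^sub>M borel) (Pair x)) = (\<integral>y. h (x, y) \<partial>m x)" for x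
    by (simp add: integral_distr)
  show "AE x in \<nu>. integrable (m x) (\<lambda>y. h (x, y))"
    using AE_integrable_bind_kernel[OF measurable_edge_kernel _ h'] by (simp add: integrable_distr_eq)
  show "integrable \<nu> (\<lambda>x. \<integral>y. h (x, y) \<partial>m x)"
    using integrable_integral_bind_kernel[OF measurable_edge_kernel _ h'] by (simp add: slice)
  show "(\<integral>z. h z \<partial>edge_measure) = (\<integral>x. (\<integral>y. h (x, y) \<partial>m x) \<partial>\<nu>)"
    using integral_bind_integrable[OF measurable_edge_kernel _ h'] by (simp add: slice edge_measure_def)
qed

lemma
  fixes g :: "'a \<Rightarrow> real"
  assumes [measurable]: "g \<in> borel_measurable borel"
  shows integrable_edge_measure_fst: "integrable edge_measure (\<lambda>z. g (fst z)) \<longleftrightarrow> integrable \<nu> g"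
    and integral_edge_measure_fst: "(\<integral>z. g (fst z) \<partial>edge_measure) = (\<integral>x. g x \<partial>\<nu>)"
    and integrable_edge_measure_snd: "integrable edge_measure (\<lambda>z. g (snd z)) \<longleftrightarrow> integrable \<nu> g"
    and integral_edge_measure_snd: "(\<integral>z. g (snd z) \<partial>edge_measure) = (\<integral>x. g x \<partial>\<nu>)"
proof -
  have [measurable]: "fst \<in> edge_measure \<rightarrow>\<^sub>M borel" "snd \<in> edge_measure \<rightarrow>\<^sub>M borel"
    by (simp_all cong: measurable_cong_sets add: sets_edge_measure)
  show "integrable edge_measure (\<lambda>z. g (fst z)) \<longleftrightarrow> integrable \<nu> g"
    using integrable_distr_eq[of fst edge_measure borel g] by (simp add: distr_edge_measure_fst)
  show "integrable edge_measure (\<lambda>z. g (snd z)) \<longleftrightarrow> integrable \<nu> g"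
    using integrable_distr_eq[of snd edge_measure borel g] by (simp add: distr_edge_measure_snd)
  show "(\<integral>z. g (fst z) \<partial>edge_measure) = (\<integral>x. g x \<partial>\<nu>)"
    using integral_distr[of fst edge_measure borel g] by (simp add: distr_edge_measure_fst)
  show "(\<integral>z. g (snd z) \<partial>edge_measure) = (\<integral>x. g x \<partial>\<nu>)"
    using integral_distr[of snd edge_measure borel g] by (simp add: distr_edge_measure_snd)
qed

lemma integral_edge_measure_swap:
  fixes h :: "'a \<times> 'a \<Rightarrow> real"
  assumes [measurable]: "h \<in> borel_measurable (borel \<Otimes>\<^sub>M borel)"
  shows "(\<integral>z. h (snd z, fst z) \<partial>edge_measure) = (\<integral>z. h z \<partial>edge_measure)"
proof -
  have [measurable]: "(\<lambda>(x, y). (y, x)) \<in> edge_measure \<rightarrow>\<^sub>M borel \<Otimes>\<^sub>M borel"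
    by (simp cong: measurable_cong_sets add: sets_edge_measure)
  have "(\<integral>z. h z \<partial>edge_measure) = (\<integral>z. h z \<partial>distr edge_measure (borel \<Otimes>\<^sub>M borel) (\<lambda>(x, y). (y, x)))"
    by (simp add: distr_edge_measure_swap)
  also have "\<dots> = (\<integral>z. h (snd z, fst z) \<partial>edge_measure)"
    by (simp add: integral_distr case_prod_beta)
  finally show ?thesis ..
qed

lemma finite_measure_nu: "finite_measure \<nu>"
  using prob_space_nu by (simp add: prob_space_def)

lemma L2_measurable: "L2 \<nu> u \<Longrightarrow> u \<in> borel_measurable borel"
  by (simp add: L2_def measurable_cong_sets[OF sets_nu refl])

lemma L2_integrable: "L2 \<nu> u \<Longrightarrow> integrable \<nu> u"
  unfolding L2_def by (blast intro: finite_measure.square_integrable_imp_integrable[OF finite_measure_nu])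

lemma L2_lin_comb: "L2 \<nu> u \<Longrightarrow> L2 \<nu> v \<Longrightarrow> L2 \<nu> (\<lambda>x. a * u x + b * v x)"
  unfolding L2_def by (auto intro!: integrable_square_lin_comb)

lemma L2_diff: "L2 \<nu> u \<Longrightarrow> L2 \<nu> v \<Longrightarrow> L2 \<nu> (\<lambda>x. u x - v x)"
  using L2_lin_comb[of u v 1 "-1"] by simp

lemma L2_const: "L2 \<nu> (\<lambda>x. c)"
  using finite_measure.integrable_const[OF finite_measure_nu] by (simp add: L2_def)

lemma L2_sum: "(\<And>i. i \<in> I \<Longrightarrow> L2 \<nu> (f i)) \<Longrightarrow> L2 \<nu> (\<lambda>x. \<Sum>i\<in>I. f i x)"
proof (induction I rule: infinite_finite_induct)
  case (insert i I)
  then show ?case using L2_lin_comb[of "f i" "\<lambda>x. \<Sum>i\<in>I. f i x" 1 1] by simp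
qed (simp_all add: L2_const)

definition inner_L2 :: "('a \<Rightarrow> real) \<Rightarrow> ('a \<Rightarrow> real) \<Rightarrow> real" where
  "inner_L2 u v = (\<integral>x. u x * v x \<partial>\<nu>)"

lemma integrable_mult_L2: "L2 \<nu> u \<Longrightarrow> L2 \<nu> v \<Longrightarrow> integrable \<nu> (\<lambda>x. u x * v x)"
  by (simp add: L2_def integrable_mult_square_integrable)

lemma inner_L2_commute: "inner_L2 u v = inner_L2 v u"
  by (simp add: inner_L2_def mult.commute)

lemma inner_L2_lin_comb_left:
  assumes "L2 \<nu> u" "L2 \<nu> v" "L2 \<nu> w"
  shows "inner_L2 (\<lambda>x. a * u x + b * v x) w = a * inner_L2 u w + b * inner_L2 v w"
proof -
  have "inner_L2 (\<lambda>x. a * u x + b * v x) w = (\<integral>x. a * (u x * w x) + b * (v x * w x) \<partial>\<nu>)"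
    by (simp add: inner_L2_def algebra_simps)
  also have "\<dots> = a * inner_L2 u w + b * inner_L2 v w"
    using integrable_mult_L2[OF assms(1,3)] integrable_mult_L2[OF assms(2,3)] by (simp add: inner_L2_def)
  finally show ?thesis .
qed

lemma inner_L2_diff_left:
  "L2 \<nu> u \<Longrightarrow> L2 \<nu> v \<Longrightarrow> L2 \<nu> w \<Longrightarrow> inner_L2 (\<lambda>x. u x - v x) w = inner_L2 u w - inner_L2 v w"
  using inner_L2_lin_comb_left[of u v w 1 "-1"] by simp

lemma inner_L2_diff_right:
  "L2 \<nu> u \<Longrightarrow> L2 \<nu> v \<Longrightarrow> L2 \<nu> w \<Longrightarrow> inner_L2 w (\<lambda>x. u x - v x) = inner_L2 w u - inner_L2 w v"
  using inner_L2_diff_left[of u v w] by (simp add: inner_L2_commute)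

lemma inner_L2_self_nonneg: "0 \<le> inner_L2 u u"
  by (simp add: inner_L2_def)

lemma inner_L2_Cauchy_Schwarz: "L2 \<nu> u \<Longrightarrow> L2 \<nu> v \<Longrightarrow> (inner_L2 u v)\<^sup>2 \<le> inner_L2 u u * inner_L2 v v"
  using Cauchy_Schwarz_integral[of u \<nu> v] by (simp add: L2_def inner_L2_def power2_eq_square)

lemma inner_L2_cong_AE:
  "L2 \<nu> u \<Longrightarrow> L2 \<nu> u' \<Longrightarrow> L2 \<nu> v \<Longrightarrow> AE x in \<nu>. u x = u' x \<Longrightarrow> inner_L2 u v = inner_L2 u' v"
  unfolding inner_L2_def L2_def by (rule integral_cong_AE) auto

lemma AE_eq_0_if_inner_L2_self_eq_0:
  assumes "L2 \<nu> u" "inner_L2 u u = 0"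
  shows "AE x in \<nu>. u x = 0"
proof -
  have "(\<integral>x. (u x)\<^sup>2 \<partial>\<nu>) = 0" using assms(2) by (simp add: inner_L2_def power2_eq_square)
  then show ?thesis
    using integral_nonneg_eq_0_iff_AE[of \<nu> "\<lambda>x. (u x)\<^sup>2"] assms(1) by (simp add: L2_def)
qed

lemma square_integral_le_inner_L2: "L2 \<nu> u \<Longrightarrow> (\<integral>x. u x \<partial>\<nu>)\<^sup>2 \<le> inner_L2 u u"
  using prob_space.square_expectation_le[OF prob_space_nu, of u]
  by (simp add: L2_def inner_L2_def power2_eq_square)

lemma
  assumes "L2 \<nu> u"
  shows integrable_edge_measure_fst_square: "integrable edge_measure (\<lambda>z. (u (fst z))\<^sup>2)"
    and integrable_edge_measure_snd_square: "integrable edge_measure (\<lambda>z. (u (snd z))\<^sup>2)"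
  using assms integrable_edge_measure_fst[of "\<lambda>x. (u x)\<^sup>2"] integrable_edge_measure_snd[of "\<lambda>x. (u x)\<^sup>2"]
  by (auto simp: L2_def measurable_cong_sets[OF sets_nu refl])

lemma integrable_edge_measure_mult:
  assumes u: "L2 \<nu> u" and v: "L2 \<nu> v" and f: "f = fst \<or> f = snd" and g: "g = fst \<or> g = snd"
  shows "integrable edge_measure (\<lambda>z. u (f z) * v (g z))"
proof (rule integrable_mult_square_integrable)
  have [measurable]: "u \<in> borel_measurable borel" "v \<in> borel_measurable borel"
    using L2_measurable u v by auto
  show "(\<lambda>z. u (f z)) \<in> borel_measurable edge_measure" "(\<lambda>z. v (g z)) \<in> borel_measurable edge_measure"
    using f g by auto
  show "integrable edge_measure (\<lambda>z. (u (f z))\<^sup>2)" "integrable edge_measure (\<lambda>z. (v (g z))\<^sup>2)"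
    using f g u v integrable_edge_measure_fst_square integrable_edge_measure_snd_square by auto
qed

section \<open>The Markov operator and the Dirichlet form\<close>

text \<open>Where \<open>u\<close> is not \<open>m x\<close>-integrable the Bochner integral is \<open>0\<close>, so identities
  involving \<open>markov_op\<close> hold only \<open>\<nu>\<close>-almost everywhere.\<close>
definition markov_op :: "('a \<Rightarrow> real) \<Rightarrow> 'a \<Rightarrow> real" where
  "markov_op u x = (\<integral>y. u y \<partial>m x)"

lemma markov_op_measurable[measurable]:
  assumes [measurable]: "u \<in> borel_measurable borel"
  shows "markov_op u \<in> borel_measurable \<nu>"
  unfolding markov_op_def[abs_def]
  by (rule measurable_compose[OF measurable_kernel_subprob integral_measurable_subprob_algebra]) simp

lemma
  assumes [measurable]: "u \<in> borel_measurable borel" and "integrable \<nu> u"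
  shows integrable_markov_op: "integrable \<nu> (markov_op u)"
    and integral_markov_op: "(\<integral>x. markov_op u x \<partial>\<nu>) = (\<integral>x. u x \<partial>\<nu>)"
proof -
  have u_snd: "integrable edge_measure (\<lambda>z. u (snd z))"
    using assms by (simp add: integrable_edge_measure_snd)
  show "integrable \<nu> (markov_op u)"
    using integrable_edge_slice_integral[OF u_snd] by (simp add: markov_op_def[abs_def])
  show "(\<integral>x. markov_op u x \<partial>\<nu>) = (\<integral>x. u x \<partial>\<nu>)"
    using integral_edge_measure[OF u_snd] by (simp add: markov_op_def integral_edge_measure_snd)
qed

lemma AE_integrable_kernel:
  assumes "L2 \<nu> u"
  shows "AE x in \<nu>. integrable (m x) u \<and> integrable (m x) (\<lambda>y. (u y)\<^sup>2)"
proof -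
  have [measurable]: "u \<in> borel_measurable borel" by (rule L2_measurable[OF assms])
  have "integrable edge_measure (\<lambda>z. u (snd z))"
    using L2_integrable[OF assms] by (simp add: integrable_edge_measure_snd)
  from AE_integrable_edge_slice[OF this]
    AE_integrable_edge_slice[OF integrable_edge_measure_snd_square[OF assms]]
  show ?thesis by eventually_elim simp
qed

lemma AE_square_markov_op_le:
  assumes "L2 \<nu> u"
  shows "AE x in \<nu>. (markov_op u x)\<^sup>2 \<le> markov_op (\<lambda>y. (u y)\<^sup>2) x"
  using AE_integrable_kernel[OF assms]
proof eventually_elim
  case (elim x)
  then show ?case
    using prob_space.square_expectation_le[OF prob_space_m, of u x] L2_measurable[OF assms]
    by (simp add: markov_op_def measurable_cong_sets[OF sets_m refl])
qed

lemma
  assumes u: "L2 \<nu> u"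
  shows L2_markov_op: "L2 \<nu> (markov_op u)"
    and inner_L2_markov_op_le: "inner_L2 (markov_op u) (markov_op u) \<le> inner_L2 u u"
proof -
  have [measurable]: "u \<in> borel_measurable borel" by (rule L2_measurable[OF u])
  have sq: "integrable \<nu> (\<lambda>x. (u x)\<^sup>2)" using u by (simp add: L2_def)
  have Msq: "integrable \<nu> (markov_op (\<lambda>y. (u y)\<^sup>2))" by (rule integrable_markov_op[OF _ sq]) simp
  have int: "integrable \<nu> (\<lambda>x. (markov_op u x)\<^sup>2)"
    by (rule Bochner_Integration.integrable_bound[OF Msq]) (use AE_square_markov_op_le[OF u] in auto)
  then show "L2 \<nu> (markov_op u)" by (simp add: L2_def)
  have "inner_L2 (markov_op u) (markov_op u) = (\<integral>x. (markov_op u x)\<^sup>2 \<partial>\<nu>)"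
    by (simp add: inner_L2_def power2_eq_square)
  also have "\<dots> \<le> (\<integral>x. markov_op (\<lambda>y. (u y)\<^sup>2) x \<partial>\<nu>)"
    by (rule integral_mono_AE[OF int Msq AE_square_markov_op_le[OF u]])
  also have "\<dots> = inner_L2 u u"
    using integral_markov_op[OF _ sq] by (simp add: inner_L2_def power2_eq_square)
  finally show "inner_L2 (markov_op u) (markov_op u) \<le> inner_L2 u u" .
qed

lemma inner_L2_markov_op_eq_edge_integral:
  assumes u: "L2 \<nu> u" and v: "L2 \<nu> v"
  shows "inner_L2 u (markov_op v) = (\<integral>z. u (fst z) * v (snd z) \<partial>edge_measure)"
  using integral_edge_measure[OF integrable_edge_measure_mult[OF u v]]
  by (simp add: inner_L2_def markov_op_def)

lemma inner_L2_markov_op_commute: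
  assumes u: "L2 \<nu> u" and v: "L2 \<nu> v"
  shows "inner_L2 u (markov_op v) = inner_L2 (markov_op u) v"
proof -
  have [measurable]: "u \<in> borel_measurable borel" "v \<in> borel_measurable borel"
    using L2_measurable u v by auto
  have "inner_L2 u (markov_op v) = (\<integral>z. u (fst z) * v (snd z) \<partial>edge_measure)"
    by (rule inner_L2_markov_op_eq_edge_integral[OF u v])
  also have "\<dots> = (\<integral>z. v (fst z) * u (snd z) \<partial>edge_measure)"
    using integral_edge_measure_swap[of "\<lambda>z. v (fst z) * u (snd z)"] by (simp add: mult.commute)
  also have "\<dots> = inner_L2 (markov_op u) v"
    by (simp add: inner_L2_markov_op_eq_edge_integral[OF v u] inner_L2_commute)
  finally show ?thesis .
qed

lemma AE_markov_op_sum: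
  fixes f :: "nat \<Rightarrow> 'a \<Rightarrow> real"
  assumes "\<And>i. L2 \<nu> (f i)"
  shows "AE x in \<nu>. markov_op (\<lambda>y. \<Sum>i\<in>I. f i y) x = (\<Sum>i\<in>I. markov_op (f i) x)"
proof -
  have "AE x in \<nu>. \<forall>i. integrable (m x) (f i)"
    using AE_integrable_kernel[OF assms] by (simp add: AE_all_countable)
  then show ?thesis by eventually_elim (simp add: markov_op_def)
qed

definition neg_laplacian :: "('a \<Rightarrow> real) \<Rightarrow> 'a \<Rightarrow> real" where
  "neg_laplacian u x = u x - markov_op u x"

lemma L2_neg_laplacian: "L2 \<nu> u \<Longrightarrow> L2 \<nu> (neg_laplacian u)"
  using L2_diff[OF _ L2_markov_op] by (simp add: neg_laplacian_def[abs_def])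

lemma AE_laplacian_m_eq:
  assumes "L2 \<nu> u"
  shows "AE x in \<nu>. laplacian_m m u x = - neg_laplacian u x"
  using AE_integrable_kernel[OF assms]
proof eventually_elim
  case (elim x)
  interpret prob_space "m x" by (rule prob_space_m)
  have "laplacian_m m u x = (\<integral>y. u y \<partial>m x) - (\<integral>y. u x \<partial>m x)"
    unfolding laplacian_m_def using elim by (intro Bochner_Integration.integral_diff) auto
  moreover have "prob UNIV = 1" using prob_space by simp
  ultimately show ?case by (simp add: neg_laplacian_def markov_op_def)
qed

lemma integral_laplacian_m_square:
  assumes u: "L2 \<nu> u"
  shows "(\<integral>x. (laplacian_m m u x)\<^sup>2 \<partial>\<nu>) = inner_L2 (neg_laplacian u) (neg_laplacian u)"
proof -
  have [measurable]: "u \<in> borel_measurable borel" by (rule L2_measurable[OF u])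
  have "(\<lambda>x. \<integral>y. u y - u x \<partial>m x) \<in> borel_measurable \<nu>"
    using measurable_compose[OF measurable_edge_kernel
        integral_measurable_subprob_algebra[of "\<lambda>z. u (snd z) - u (fst z)"]]
    by (simp add: integral_distr)
  then have "laplacian_m m u \<in> borel_measurable \<nu>" by (simp add: laplacian_m_def[abs_def])
  then have "(\<integral>x. (laplacian_m m u x)\<^sup>2 \<partial>\<nu>) = (\<integral>x. (neg_laplacian u x)\<^sup>2 \<partial>\<nu>)"
    using AE_laplacian_m_eq[OF u] L2_neg_laplacian[OF u] by (intro integral_cong_AE) (auto simp: L2_def)
  then show ?thesis by (simp add: inner_L2_def power2_eq_square)
qed

lemma integral_neg_laplacian: "L2 \<nu> u \<Longrightarrow> (\<integral>x. neg_laplacian u x \<partial>\<nu>) = 0"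
  using integral_markov_op[OF L2_measurable L2_integrable] L2_integrable L2_integrable[OF L2_markov_op]
  by (simp add: neg_laplacian_def)

text \<open>The polarisation of \<^const>\<open>H_m\<close>.\<close>
definition dirichlet_form :: "('a \<Rightarrow> real) \<Rightarrow> ('a \<Rightarrow> real) \<Rightarrow> real" where
  "dirichlet_form u v =
     (\<integral>z. (u (snd z) - u (fst z)) * (v (snd z) - v (fst z)) \<partial>edge_measure) / 2"

lemma dirichlet_form_commute: "dirichlet_form u v = dirichlet_form v u"
  by (simp add: dirichlet_form_def mult.commute)

lemma dirichlet_form_self_nonneg: "0 \<le> dirichlet_form u u"
  by (simp add: dirichlet_form_def)

lemma integrable_edge_measure_gradient_square:
  assumes "L2 \<nu> u"
  shows "integrable edge_measure (\<lambda>z. (u (snd z) - u (fst z))\<^sup>2)"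
  using integrable_square_lin_comb[of "\<lambda>z. u (snd z)" edge_measure "\<lambda>z. u (fst z)" 1 "-1"]
    L2_measurable[OF assms] integrable_edge_measure_snd_square[OF assms]
    integrable_edge_measure_fst_square[OF assms]
  by simp

lemma integrable_edge_measure_gradient_mult:
  assumes "L2 \<nu> u" "L2 \<nu> v"
  shows "integrable edge_measure (\<lambda>z. (u (snd z) - u (fst z)) * (v (snd z) - v (fst z)))"
  using L2_measurable[OF assms(1)] L2_measurable[OF assms(2)]
  by (intro integrable_mult_square_integrable integrable_edge_measure_gradient_square assms) simp_all

lemma dirichlet_form_Cauchy_Schwarz:
  assumes "L2 \<nu> u" "L2 \<nu> v"
  shows "(dirichlet_form u v)\<^sup>2 \<le> dirichlet_form u u * dirichlet_form v v"
proof -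
  have [measurable]: "u \<in> borel_measurable borel" "v \<in> borel_measurable borel"
    using L2_measurable assms by auto
  have "(2 * dirichlet_form u v)\<^sup>2 \<le> (2 * dirichlet_form u u) * (2 * dirichlet_form v v)"
    using Cauchy_Schwarz_integral[of "\<lambda>z. u (snd z) - u (fst z)" edge_measure "\<lambda>z. v (snd z) - v (fst z)"]
      integrable_edge_measure_gradient_square[OF assms(1)] integrable_edge_measure_gradient_square[OF assms(2)]
    by (simp add: dirichlet_form_def power2_eq_square)
  then show ?thesis by (simp add: power2_eq_square)
qed

lemma dirichlet_form_diff_self:
  assumes "L2 \<nu> u" "L2 \<nu> v"
  shows "dirichlet_form (\<lambda>x. u x - v x) (\<lambda>x. u x - v x)
    = dirichlet_form u u - 2 * dirichlet_form u v + dirichlet_form v v"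
proof -
  let ?D = "\<lambda>u z. u (snd z) - u (fst z)"
  have "(\<integral>z. ?D (\<lambda>x. u x - v x) z * ?D (\<lambda>x. u x - v x) z \<partial>edge_measure)
      = (\<integral>z. ?D u z * ?D u z - 2 * (?D u z * ?D v z) + ?D v z * ?D v z \<partial>edge_measure)"
    by (simp add: algebra_simps)
  also have "\<dots> = (\<integral>z. ?D u z * ?D u z \<partial>edge_measure) - 2 * (\<integral>z. ?D u z * ?D v z \<partial>edge_measure)
      + (\<integral>z. ?D v z * ?D v z \<partial>edge_measure)"
    using integrable_edge_measure_gradient_mult[OF assms(1) assms(1)]
      integrable_edge_measure_gradient_mult[OF assms(1) assms(2)]
      integrable_edge_measure_gradient_mult[OF assms(2) assms(2)]
    by simp
  finally show ?thesis by (simp add: dirichlet_form_def)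
qed

lemma inner_L2_neg_laplacian:
  assumes u: "L2 \<nu> u" and v: "L2 \<nu> v"
  shows "inner_L2 (neg_laplacian u) v = dirichlet_form u v"
proof -
  have [measurable]: "u \<in> borel_measurable borel" "v \<in> borel_measurable borel"
    using L2_measurable u v by auto
  have "(\<integral>z. (u (snd z) - u (fst z)) * (v (snd z) - v (fst z)) \<partial>edge_measure)
      = (\<integral>z. u (snd z) * v (snd z) \<partial>edge_measure) - (\<integral>z. u (snd z) * v (fst z) \<partial>edge_measure)
        - (\<integral>z. u (fst z) * v (snd z) \<partial>edge_measure) + (\<integral>z. u (fst z) * v (fst z) \<partial>edge_measure)"
    using integrable_edge_measure_mult[OF u v] by (simp add: algebra_simps)
  also have "\<dots> = 2 * inner_L2 u v - inner_L2 v (markov_op u) - inner_L2 u (markov_op v)"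
    using integral_edge_measure_fst[of "\<lambda>x. u x * v x"] integral_edge_measure_snd[of "\<lambda>x. u x * v x"]
      inner_L2_markov_op_eq_edge_integral[OF u v] inner_L2_markov_op_eq_edge_integral[OF v u]
    by (simp add: inner_L2_def mult.commute)
  also have "\<dots> = 2 * inner_L2 (neg_laplacian u) v"
    using inner_L2_diff_left[OF u L2_markov_op[OF u] v] inner_L2_markov_op_commute[OF u v]
    by (simp add: neg_laplacian_def[abs_def] inner_L2_commute)
  finally show ?thesis by (simp add: dirichlet_form_def)
qed

lemma H_m_eq_dirichlet_form: "L2 \<nu> u \<Longrightarrow> H_m m \<nu> u = dirichlet_form u u"
  using integral_edge_measure[OF integrable_edge_measure_gradient_square]
  by (simp add: H_m_def dirichlet_form_def power2_eq_square)

lemma Var_nu_eq_inner_L2: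
  "Var_nu \<nu> u = inner_L2 (\<lambda>x. u x - (\<integral>y. u y \<partial>\<nu>)) (\<lambda>x. u x - (\<integral>y. u y \<partial>\<nu>))"
  by (simp add: Var_nu_def inner_L2_def power2_eq_square)

lemma AE_neg_laplacian_eq_0_if_L2_limit:
  assumes u: "L2 \<nu> u" and s: "\<And>n. L2 \<nu> (s n)"
    and lim: "(\<lambda>n. inner_L2 (\<lambda>x. s n x - u x) (\<lambda>x. s n x - u x)) \<longlonglongrightarrow> 0"
    and lim_neg_laplacian: "(\<lambda>n. inner_L2 (neg_laplacian (s n)) (neg_laplacian (s n))) \<longlonglongrightarrow> 0"
  shows "AE x in \<nu>. neg_laplacian u x = 0"
proof -
  define z where "z = neg_laplacian u"
  have z: "L2 \<nu> z" unfolding z_def by (rule L2_neg_laplacian[OF u])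
  have Dz: "L2 \<nu> (neg_laplacian z)" by (rule L2_neg_laplacian[OF z])
  \<comment> \<open>self-adjointness moves \<open>-\<Delta>\<^sub>m\<close> onto \<open>s n\<close>, up to an error controlled by \<open>\<parallel>s n - u\<parallel>\<close>\<close>
  have decomp: "inner_L2 z z = inner_L2 (neg_laplacian (s n)) z - inner_L2 (neg_laplacian z) (\<lambda>x. s n x - u x)"
    for n
    using inner_L2_diff_right[OF s u Dz, of n] inner_L2_neg_laplacian[OF u z] inner_L2_neg_laplacian[OF z u]
      inner_L2_neg_laplacian[OF z s] inner_L2_neg_laplacian[OF s z]
    by (simp add: z_def dirichlet_form_commute)
  have "(\<lambda>n. inner_L2 (neg_laplacian (s n)) z) \<longlonglongrightarrow> 0"
    using inner_L2_Cauchy_Schwarz[OF L2_neg_laplacian[OF s] z]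
    by (intro tendsto_0_if_square_le[OF _ lim_neg_laplacian])
  moreover have "(\<lambda>n. inner_L2 (neg_laplacian z) (\<lambda>x. s n x - u x)) \<longlonglongrightarrow> 0"
    using inner_L2_Cauchy_Schwarz[OF Dz L2_diff[OF s u]]
    by (intro tendsto_0_if_square_le[OF _ lim]) (simp add: mult.commute)
  ultimately have "(\<lambda>n. inner_L2 (neg_laplacian (s n)) z - inner_L2 (neg_laplacian z) (\<lambda>x. s n x - u x))
      \<longlonglongrightarrow> 0 - 0"
    by (rule tendsto_diff)
  then have "(\<lambda>n. inner_L2 z z) \<longlonglongrightarrow> 0" by (simp only: decomp[symmetric]) simp
  then have "inner_L2 z z = 0" by (simp add: LIMSEQ_const_iff)
  then show ?thesis using AE_eq_0_if_inner_L2_self_eq_0[OF z] by (simp add: z_def)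
qed

lemma tendsto_integral_if_L2_limit:
  assumes u: "L2 \<nu> u" and s: "\<And>n. L2 \<nu> (s n)"
    and lim: "(\<lambda>n. inner_L2 (\<lambda>x. s n x - u x) (\<lambda>x. s n x - u x)) \<longlonglongrightarrow> 0"
  shows "(\<lambda>n. \<integral>x. s n x \<partial>\<nu>) \<longlonglongrightarrow> (\<integral>x. u x \<partial>\<nu>)"
proof -
  have "(\<lambda>n. (\<integral>x. s n x \<partial>\<nu>) - (\<integral>x. u x \<partial>\<nu>)) \<longlonglongrightarrow> 0"
  proof (rule tendsto_0_if_square_le[OF _ lim])
    fix n
    show "((\<integral>x. s n x \<partial>\<nu>) - (\<integral>x. u x \<partial>\<nu>))\<^sup>2 \<le> inner_L2 (\<lambda>x. s n x - u x) (\<lambda>x. s n x - u x) * 1"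
      using square_integral_le_inner_L2[OF L2_diff[OF s u]] L2_integrable[OF u] L2_integrable[OF s]
      by simp
  qed
  then show ?thesis by (simp add: LIM_zero_iff)
qed

section \<open>The lazy random walk\<close>

text \<open>Unlike \<open>M\<close>, the lazy walk \<open>T = (I + M)/2\<close> is a positive operator, which makes the
  correlations \<open>\<langle>g, T\<^sup>n g\<rangle>\<close> decrease.\<close>
definition lazy_op :: "('a \<Rightarrow> real) \<Rightarrow> 'a \<Rightarrow> real" where
  "lazy_op u x = (u x + markov_op u x) / 2"

lemma neg_laplacian_eq_lazy_op: "neg_laplacian u x = 2 * (u x - lazy_op u x)"
  by (simp add: neg_laplacian_def lazy_op_def field_simps)

lemma L2_lazy_op: "L2 \<nu> u \<Longrightarrow> L2 \<nu> (lazy_op u)"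
  using L2_lin_comb[OF _ L2_markov_op, of u u "1/2" "1/2"]
  by (simp add: lazy_op_def[abs_def] add_divide_distrib)

lemma L2_lazy_pow: "L2 \<nu> g \<Longrightarrow> L2 \<nu> ((lazy_op ^^ n) g)"
  by (induction n) (simp_all add: L2_lazy_op)

lemma inner_L2_lazy_op:
  assumes "L2 \<nu> u" "L2 \<nu> v"
  shows "inner_L2 (lazy_op u) v = (inner_L2 u v + inner_L2 (markov_op u) v) / 2"
  using inner_L2_lin_comb_left[OF assms(1) L2_markov_op[OF assms(1)] assms(2), of "1/2" "1/2"]
  by (simp add: lazy_op_def[abs_def] add_divide_distrib)

lemma inner_L2_lazy_op_commute:
  assumes "L2 \<nu> u" "L2 \<nu> v"
  shows "inner_L2 (lazy_op u) v = inner_L2 u (lazy_op v)"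
  using inner_L2_lazy_op[OF assms] inner_L2_lazy_op[OF assms(2,1)] inner_L2_markov_op_commute[OF assms(2,1)]
  by (simp add: inner_L2_commute)

lemma inner_L2_lazy_op_bounds:
  assumes w: "L2 \<nu> w"
  shows "0 \<le> inner_L2 (lazy_op w) w" and "inner_L2 (lazy_op w) w \<le> inner_L2 w w"
    and "inner_L2 (lazy_op w) (lazy_op w) \<le> inner_L2 (lazy_op w) w"
proof -
  have Mw: "L2 \<nu> (markov_op w)" by (rule L2_markov_op[OF w])
  have contraction: "inner_L2 (markov_op w) (markov_op w) \<le> inner_L2 w w"
    by (rule inner_L2_markov_op_le[OF w])
  have "(inner_L2 (markov_op w) w)\<^sup>2 \<le> (inner_L2 w w)\<^sup>2"
    using inner_L2_Cauchy_Schwarz[OF Mw w] contraction inner_L2_self_nonneg[of w]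
    by (metis mult_right_mono order_trans power2_eq_square)
  then have "\<bar>inner_L2 (markov_op w) w\<bar> \<le> \<bar>inner_L2 w w\<bar>" by (simp only: abs_le_square_iff)
  then have MB: "\<bar>inner_L2 (markov_op w) w\<bar> \<le> inner_L2 w w" by (simp add: inner_L2_self_nonneg)
  have Tw_w: "inner_L2 (lazy_op w) w = (inner_L2 w w + inner_L2 (markov_op w) w) / 2"
    by (rule inner_L2_lazy_op[OF w w])
  have Tw_Mw: "inner_L2 (lazy_op w) (markov_op w) = (inner_L2 (markov_op w) w + inner_L2 (markov_op w) (markov_op w)) / 2"
    using inner_L2_lazy_op[OF w Mw] inner_L2_commute[of w "markov_op w"] by simp
  have "inner_L2 (lazy_op w) (lazy_op w) = (inner_L2 (lazy_op w) w + inner_L2 (lazy_op w) (markov_op w)) / 2"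
    using inner_L2_lazy_op[OF w L2_lazy_op[OF w]] inner_L2_commute[of w "lazy_op w"]
      inner_L2_commute[of "markov_op w" "lazy_op w"]
    by simp
  then have "inner_L2 (lazy_op w) (lazy_op w)
      = (inner_L2 w w + 2 * inner_L2 (markov_op w) w + inner_L2 (markov_op w) (markov_op w)) / 4"
    unfolding Tw_w Tw_Mw by (simp add: field_simps)
  then show "0 \<le> inner_L2 (lazy_op w) w" "inner_L2 (lazy_op w) w \<le> inner_L2 w w"
    "inner_L2 (lazy_op w) (lazy_op w) \<le> inner_L2 (lazy_op w) w"
    using Tw_w MB contraction by (simp_all add: abs_le_iff)
qed

lemma integral_lazy_pow: "L2 \<nu> g \<Longrightarrow> (\<integral>x. (lazy_op ^^ n) g x \<partial>\<nu>) = (\<integral>x. g x \<partial>\<nu>)"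
proof (induction n)
  case (Suc n)
  have L: "L2 \<nu> ((lazy_op ^^ n) g)" by (rule L2_lazy_pow[OF Suc.prems])
  have "(\<integral>x. lazy_op ((lazy_op ^^ n) g) x \<partial>\<nu>)
      = ((\<integral>x. (lazy_op ^^ n) g x \<partial>\<nu>) + (\<integral>x. markov_op ((lazy_op ^^ n) g) x \<partial>\<nu>)) / 2"
    using L2_integrable[OF L] L2_integrable[OF L2_markov_op[OF L]] by (simp add: lazy_op_def)
  then show ?case using Suc integral_markov_op[OF L2_measurable[OF L] L2_integrable[OF L]] by simp
qed simp

definition lazy_corr :: "('a \<Rightarrow> real) \<Rightarrow> nat \<Rightarrow> real" where
  "lazy_corr g n = inner_L2 g ((lazy_op ^^ n) g)"

lemma inner_L2_lazy_pow:
  assumes "L2 \<nu> g"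
  shows "inner_L2 ((lazy_op ^^ i) g) ((lazy_op ^^ j) g) = lazy_corr g (i + j)"
proof (induction i arbitrary: j)
  case (Suc i)
  have "inner_L2 ((lazy_op ^^ Suc i) g) ((lazy_op ^^ j) g) = inner_L2 ((lazy_op ^^ i) g) ((lazy_op ^^ Suc j) g)"
    using inner_L2_lazy_op_commute[OF L2_lazy_pow[OF assms] L2_lazy_pow[OF assms]] by simp
  then show ?case using Suc.IH[of "Suc j"] by simp
qed (simp add: lazy_corr_def)

lemma
  assumes g: "L2 \<nu> g"
  shows lazy_corr_Suc_le: "lazy_corr g (Suc k) \<le> lazy_corr g k"
    and lazy_corr_nonneg: "0 \<le> lazy_corr g k"
proof -
  have "\<exists>j. k = 2 * j \<or> k = Suc (2 * j)" by presburger
  then obtain j where k: "k = 2 * j \<or> k = Suc (2 * j)" by blast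
  define w where "w = (lazy_op ^^ j) g"
  have w: "L2 \<nu> w" unfolding w_def by (rule L2_lazy_pow[OF g])
  have c0: "lazy_corr g (2 * j) = inner_L2 w w"
    using inner_L2_lazy_pow[OF g, of j j] by (simp add: w_def mult_2)
  have c1: "lazy_corr g (Suc (2 * j)) = inner_L2 (lazy_op w) w"
    using inner_L2_lazy_pow[OF g, of "Suc j" j] by (simp add: w_def mult_2)
  have c2: "lazy_corr g (Suc (Suc (2 * j))) = inner_L2 (lazy_op w) (lazy_op w)"
    using inner_L2_lazy_pow[OF g, of "Suc j" "Suc j"] by (simp add: w_def mult_2)
  note bounds = inner_L2_lazy_op_bounds[OF w] inner_L2_self_nonneg[of w]
  have "lazy_corr g (Suc k) \<le> lazy_corr g k \<and> 0 \<le> lazy_corr g k"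
    using k by (elim disjE) (simp_all add: c0 c1 c2 bounds)
  then show "lazy_corr g (Suc k) \<le> lazy_corr g k" "0 \<le> lazy_corr g k" by simp_all
qed

lemma lazy_corr_convergent:
  assumes "L2 \<nu> g"
  obtains \<beta> where "lazy_corr g \<longlonglongrightarrow> \<beta>"
proof -
  have "decseq (lazy_corr g)" by (intro decseq_SucI lazy_corr_Suc_le[OF assms])
  then show ?thesis
    using decseq_convergent[of "lazy_corr g" 0] lazy_corr_nonneg[OF assms] that by blast
qed

lemma inner_L2_lazy_pow_diff:
  assumes g: "L2 \<nu> g"
  shows "inner_L2 (\<lambda>x. (lazy_op ^^ i) g x - (lazy_op ^^ j) g x) (\<lambda>x. (lazy_op ^^ i) g x - (lazy_op ^^ j) g x)
    = lazy_corr g (2 * i) - 2 * lazy_corr g (i + j) + lazy_corr g (2 * j)"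
proof -
  have Li: "L2 \<nu> ((lazy_op ^^ i) g)" and Lj: "L2 \<nu> ((lazy_op ^^ j) g)" using L2_lazy_pow[OF g] by auto
  have "inner_L2 ((lazy_op ^^ i) g) ((lazy_op ^^ i) g) = lazy_corr g (2 * i)"
    "inner_L2 ((lazy_op ^^ j) g) ((lazy_op ^^ j) g) = lazy_corr g (2 * j)"
    "inner_L2 ((lazy_op ^^ i) g) ((lazy_op ^^ j) g) = lazy_corr g (i + j)"
    "inner_L2 ((lazy_op ^^ j) g) ((lazy_op ^^ i) g) = lazy_corr g (i + j)"
    using inner_L2_lazy_pow[OF g] by (simp_all add: mult_2 add.commute[of j i])
  then show ?thesis
    using inner_L2_diff_left[OF Li Lj L2_diff[OF Li Lj]] inner_L2_diff_right[OF Li Lj Li]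
      inner_L2_diff_right[OF Li Lj Lj]
    by linarith
qed

lemma lazy_pow_Cauchy:
  assumes g: "L2 \<nu> g" and "0 < e"
  shows "\<exists>N. \<forall>i\<ge>N. \<forall>j\<ge>N. (\<integral>x. ((lazy_op ^^ i) g x - (lazy_op ^^ j) g x)\<^sup>2 \<partial>\<nu>) < e"
proof -
  obtain \<beta> where "lazy_corr g \<longlonglongrightarrow> \<beta>" using lazy_corr_convergent[OF g] .
  with \<open>0 < e\<close> obtain N where N: "\<And>n. N \<le> n \<Longrightarrow> \<bar>lazy_corr g n - \<beta>\<bar> < e / 4"
    unfolding LIMSEQ_def dist_real_def by (meson zero_less_divide_iff zero_less_numeral)
  then have near: "\<beta> - e / 4 < lazy_corr g n" "lazy_corr g n < \<beta> + e / 4" if "N \<le> n" for n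
    using that unfolding abs_less_iff by fastforce+
  have "(\<integral>x. ((lazy_op ^^ i) g x - (lazy_op ^^ j) g x)\<^sup>2 \<partial>\<nu>) < e" if "N \<le> i" "N \<le> j" for i j
  proof -
    have "(\<integral>x. ((lazy_op ^^ i) g x - (lazy_op ^^ j) g x)\<^sup>2 \<partial>\<nu>)
        = lazy_corr g (2 * i) - 2 * lazy_corr g (i + j) + lazy_corr g (2 * j)"
      using inner_L2_lazy_pow_diff[OF g, of i j] by (simp add: inner_L2_def power2_eq_square)
    with near[of "2 * i"] near[of "i + j"] near[of "2 * j"] that show ?thesis by simp
  qed
  then show ?thesis by blast
qed

lemma lazy_pow_L2_limit:
  assumes g: "L2 \<nu> g"
  obtains u where "L2 \<nu> u"
    "(\<lambda>n. inner_L2 (\<lambda>x. (lazy_op ^^ n) g x - u x) (\<lambda>x. (lazy_op ^^ n) g x - u x)) \<longlonglongrightarrow> 0"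
proof -
  obtain u where "u \<in> borel_measurable \<nu>" "integrable \<nu> (\<lambda>x. (u x)\<^sup>2)"
    and "(\<lambda>n. \<integral>x. ((lazy_op ^^ n) g x - u x)\<^sup>2 \<partial>\<nu>) \<longlonglongrightarrow> 0"
    using finite_measure.square_integrable_Cauchy_converges[OF finite_measure_nu, of "\<lambda>n. (lazy_op ^^ n) g"]
      L2_lazy_pow[OF g] lazy_pow_Cauchy[OF g] by (auto simp: L2_def)
  then show ?thesis using that by (simp add: L2_def inner_L2_def power2_eq_square)
qed

lemma inner_L2_neg_laplacian_lazy_pow:
  assumes g: "L2 \<nu> g"
  shows "inner_L2 (neg_laplacian ((lazy_op ^^ n) g)) (neg_laplacian ((lazy_op ^^ n) g))
    = 4 * (lazy_corr g (2 * n) - 2 * lazy_corr g (n + Suc n) + lazy_corr g (2 * Suc n))"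
proof -
  let ?d = "\<lambda>x. (lazy_op ^^ n) g x - (lazy_op ^^ Suc n) g x"
  have "neg_laplacian ((lazy_op ^^ n) g) = (\<lambda>x. 2 * ?d x)"
    by (simp add: fun_eq_iff neg_laplacian_eq_lazy_op)
  moreover have "inner_L2 (\<lambda>x. 2 * h x) (\<lambda>x. 2 * h x) = 4 * inner_L2 h h" for h
  proof -
    have "2 * h x * (2 * h x) = 4 * (h x * h x)" for x by simp
    then show ?thesis by (simp only: inner_L2_def integral_mult_right_zero)
  qed
  ultimately have "inner_L2 (neg_laplacian ((lazy_op ^^ n) g)) (neg_laplacian ((lazy_op ^^ n) g))
      = 4 * inner_L2 ?d ?d"
    by (simp only:)
  then show ?thesis using inner_L2_lazy_pow_diff[OF g, of n "Suc n"] by simp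
qed

lemma tendsto_neg_laplacian_lazy_pow:
  assumes g: "L2 \<nu> g"
  shows "(\<lambda>n. inner_L2 (neg_laplacian ((lazy_op ^^ n) g)) (neg_laplacian ((lazy_op ^^ n) g))) \<longlonglongrightarrow> 0"
proof -
  obtain \<beta> where \<beta>: "lazy_corr g \<longlonglongrightarrow> \<beta>" using lazy_corr_convergent[OF g] .
  have "(\<lambda>n. 4 * (lazy_corr g (2 * n) - 2 * lazy_corr g (n + Suc n) + lazy_corr g (2 * Suc n)))
      \<longlonglongrightarrow> 4 * (\<beta> - 2 * \<beta> + \<beta>)"
    using LIMSEQ_subseq_LIMSEQ[OF \<beta>, of "\<lambda>n. 2 * n"] LIMSEQ_subseq_LIMSEQ[OF \<beta>, of "\<lambda>n. n + Suc n"]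
      LIMSEQ_subseq_LIMSEQ[OF \<beta>, of "\<lambda>n. 2 * Suc n"]
    by (intro tendsto_intros) (auto simp: strict_mono_def comp_def)
  then show ?thesis by (simp add: inner_L2_neg_laplacian_lazy_pow[OF g])
qed

lemma lazy_corr_tendsto_0:
  assumes erg: "ergodic m \<nu>" and g: "L2 \<nu> g" and mean: "(\<integral>x. g x \<partial>\<nu>) = 0"
  shows "lazy_corr g \<longlonglongrightarrow> 0"
proof -
  define s where "s n = (lazy_op ^^ n) g" for n
  have s: "L2 \<nu> (s n)" for n unfolding s_def by (rule L2_lazy_pow[OF g])
  obtain u where u: "L2 \<nu> u" and lim: "(\<lambda>n. inner_L2 (\<lambda>x. s n x - u x) (\<lambda>x. s n x - u x)) \<longlonglongrightarrow> 0"
    unfolding s_def by (rule lazy_pow_L2_limit[OF g])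
  \<comment> \<open>the limit is harmonic, hence constant by ergodicity, and has the mean of \<open>g\<close>\<close>
  have "AE x in \<nu>. neg_laplacian u x = 0"
    using tendsto_neg_laplacian_lazy_pow[OF g] unfolding s_def[symmetric]
    by (rule AE_neg_laplacian_eq_0_if_L2_limit[OF u s lim])
  then have "AE x in \<nu>. laplacian_m m u x = 0"
    using AE_laplacian_m_eq[OF u] by eventually_elim simp
  then obtain c where c: "AE x in \<nu>. u x = c" using erg u by (auto simp: ergodic_def)
  have "(\<integral>x. u x \<partial>\<nu>) = c"
    using integral_cong_AE[OF _ _ c] prob_space.prob_space[OF prob_space_nu] u
    by (simp add: L2_def)
  moreover have "(\<lambda>n. \<integral>x. s n x \<partial>\<nu>) \<longlonglongrightarrow> (\<integral>x. u x \<partial>\<nu>)"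
    by (rule tendsto_integral_if_L2_limit[OF u s lim])
  ultimately have "c = 0" using integral_lazy_pow[OF g] mean by (simp add: s_def LIMSEQ_const_iff)
  with c have "AE x in \<nu>. s n x - u x = s n x" for n by auto
  then have "inner_L2 (\<lambda>x. s n x - u x) (\<lambda>x. s n x - u x) = inner_L2 (s n) (s n)" for n
    using inner_L2_cong_AE[OF L2_diff[OF s u] s L2_diff[OF s u]] inner_L2_cong_AE[OF L2_diff[OF s u] s s]
    by (metis inner_L2_commute)
  with lim have "(\<lambda>n. lazy_corr g (2 * n)) \<longlonglongrightarrow> 0"
    using inner_L2_lazy_pow[OF g] by (simp add: s_def mult_2)
  moreover obtain \<beta> where \<beta>: "lazy_corr g \<longlonglongrightarrow> \<beta>" using lazy_corr_convergent[OF g] .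
  then have "(\<lambda>n. lazy_corr g (2 * n)) \<longlonglongrightarrow> \<beta>"
    using LIMSEQ_subseq_LIMSEQ[OF \<beta>, of "\<lambda>n. 2 * n"] by (simp add: strict_mono_def comp_def)
  ultimately show ?thesis using \<beta> LIMSEQ_unique by blast
qed

lemma dirichlet_form_lazy_pow:
  assumes g: "L2 \<nu> g"
  shows "dirichlet_form ((lazy_op ^^ i) g) ((lazy_op ^^ j) g)
    = 2 * (lazy_corr g (i + j) - lazy_corr g (Suc (i + j)))"
proof -
  have Li: "L2 \<nu> ((lazy_op ^^ i) g)" "L2 \<nu> ((lazy_op ^^ Suc i) g)" and Lj: "L2 \<nu> ((lazy_op ^^ j) g)"
    by (simp_all only: L2_lazy_pow[OF g])
  have "dirichlet_form ((lazy_op ^^ i) g) ((lazy_op ^^ j) g)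
      = inner_L2 (\<lambda>x. 2 * (lazy_op ^^ i) g x + (-2) * (lazy_op ^^ Suc i) g x) ((lazy_op ^^ j) g)"
    using inner_L2_neg_laplacian[OF Li(1) Lj] by (simp add: neg_laplacian_eq_lazy_op[abs_def] algebra_simps)
  also have "\<dots> = 2 * (lazy_corr g (i + j) - lazy_corr g (Suc (i + j)))"
    using inner_L2_lin_comb_left[OF Li Lj, of 2 "-2"] inner_L2_lazy_pow[OF g, of i j]
      inner_L2_lazy_pow[OF g, of "Suc i" j]
    by simp
  finally show ?thesis .
qed

lemma AE_neg_laplacian_lazy_sum:
  assumes g: "L2 \<nu> g"
  shows "AE x in \<nu>. neg_laplacian (\<lambda>y. \<Sum>i<n. (lazy_op ^^ i) g y / 2) x = g x - (lazy_op ^^ n) g x"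
proof -
  have "L2 \<nu> (\<lambda>y. (lazy_op ^^ i) g y / 2)" for i
    using L2_lin_comb[OF L2_lazy_pow[OF g, of i] L2_const, where a = "1/2" and b = 0] by simp
  then have "AE x in \<nu>. markov_op (\<lambda>y. \<Sum>i<n. (lazy_op ^^ i) g y / 2) x
      = (\<Sum>i<n. markov_op (\<lambda>y. (lazy_op ^^ i) g y / 2) x)"
    by (rule AE_markov_op_sum)
  then show ?thesis
  proof eventually_elim
    case (elim x)
    have "neg_laplacian (\<lambda>y. \<Sum>i<n. (lazy_op ^^ i) g y / 2) x
        = (\<Sum>i<n. (lazy_op ^^ i) g x - (lazy_op ^^ Suc i) g x)"
      using elim by (simp add: neg_laplacian_def lazy_op_def markov_op_def sum_subtractf
          sum_divide_distrib[symmetric] diff_divide_distrib add_divide_distrib)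
    also have "\<dots> = g x - (lazy_op ^^ n) g x"
      using sum_lessThan_telescope'[of "\<lambda>i. (lazy_op ^^ i) g x" n] by simp
    finally show ?case .
  qed
qed

section \<open>Poincare inequalities and the spectral gap\<close>

lemma laplacian_bound_if_Poincare:
  assumes "0 \<le> \<gamma>" and Poincare: "\<And>f. L2 \<nu> f \<Longrightarrow> \<gamma> * Var_nu \<nu> f \<le> H_m m \<nu> f"
    and u: "L2 \<nu> u"
  shows "\<gamma> * H_m m \<nu> u \<le> (\<integral>x. (laplacian_m m u x)\<^sup>2 \<partial>\<nu>)"
proof -
  define c where "c = (\<integral>x. u x \<partial>\<nu>)"
  have centred: "L2 \<nu> (\<lambda>x. u x - c)" by (rule L2_diff[OF u L2_const])
  have Du: "L2 \<nu> (neg_laplacian u)" by (rule L2_neg_laplacian[OF u])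
  \<comment> \<open>since \<open>-\<Delta>\<^sub>m u\<close> has mean zero, \<open>H\<^sub>m(u)\<close> only sees the centred part of \<open>u\<close>\<close>
  have "inner_L2 (neg_laplacian u) (\<lambda>x. c) = 0"
    using integral_neg_laplacian[OF u] by (simp add: inner_L2_def)
  then have H_eq: "H_m m \<nu> u = inner_L2 (neg_laplacian u) (\<lambda>x. u x - c)"
    using inner_L2_diff_right[OF u L2_const Du]
    by (simp add: inner_L2_neg_laplacian[OF u u] H_m_eq_dirichlet_form[OF u])
  have Var_eq: "Var_nu \<nu> u = inner_L2 (\<lambda>x. u x - c) (\<lambda>x. u x - c)"
    by (simp add: Var_nu_eq_inner_L2 c_def)
  have "(H_m m \<nu> u)\<^sup>2 \<le> Var_nu \<nu> u * inner_L2 (neg_laplacian u) (neg_laplacian u)"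
    using inner_L2_Cauchy_Schwarz[OF Du centred] unfolding H_eq Var_eq by (simp only: mult.commute)
  from mult_le_of_square_le_mult[OF _ _ \<open>0 \<le> \<gamma>\<close> this Poincare[OF u]]
  have "\<gamma> * H_m m \<nu> u \<le> inner_L2 (neg_laplacian u) (neg_laplacian u)"
    by (simp add: H_m_eq_dirichlet_form[OF u] dirichlet_form_self_nonneg inner_L2_self_nonneg)
  then show ?thesis by (simp add: integral_laplacian_m_square[OF u])
qed

lemma Poincare_on_range_neg_laplacian:
  assumes "0 \<le> l" and bound: "\<And>h. L2 \<nu> h \<Longrightarrow> l * H_m m \<nu> h \<le> (\<integral>x. (laplacian_m m h x)\<^sup>2 \<partial>\<nu>)"
    and k: "L2 \<nu> k" and d: "L2 \<nu> d" and range: "AE x in \<nu>. neg_laplacian k x = d x"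
  shows "l * inner_L2 d d \<le> dirichlet_form d d"
proof -
  have Dk: "L2 \<nu> (neg_laplacian k)" by (rule L2_neg_laplacian[OF k])
  have Dk_d: "inner_L2 (neg_laplacian k) w = inner_L2 d w" if "L2 \<nu> w" for w
    by (rule inner_L2_cong_AE[OF Dk d that range])
  have "dirichlet_form k d = inner_L2 d d"
    using inner_L2_neg_laplacian[OF k d] Dk_d[OF d] by simp
  moreover have "l * dirichlet_form k k \<le> inner_L2 d d"
    using bound[OF k] Dk_d[OF Dk] Dk_d[OF d]
    by (simp add: H_m_eq_dirichlet_form[OF k] integral_laplacian_m_square[OF k] inner_L2_commute)
  ultimately show ?thesis
    using dirichlet_form_Cauchy_Schwarz[OF k d] \<open>0 \<le> l\<close>
    by (intro mult_le_of_square_le_mult[of "inner_L2 d d" _ l "dirichlet_form k k"])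
       (simp_all add: inner_L2_self_nonneg dirichlet_form_self_nonneg)
qed

lemma Poincare_bound_lazy_corr:
  assumes "0 \<le> l" and bound: "\<And>h. L2 \<nu> h \<Longrightarrow> l * H_m m \<nu> h \<le> (\<integral>x. (laplacian_m m h x)\<^sup>2 \<partial>\<nu>)"
    and g: "L2 \<nu> g"
  shows "l * (lazy_corr g 0 - 2 * lazy_corr g n + lazy_corr g (2 * n))
    \<le> dirichlet_form g g - 4 * (lazy_corr g n - lazy_corr g (Suc n))
       + 2 * (lazy_corr g (2 * n) - lazy_corr g (Suc (2 * n)))"
proof -
  let ?s = "(lazy_op ^^ n) g"
  have s: "L2 \<nu> ?s" by (rule L2_lazy_pow[OF g])
  have k: "L2 \<nu> (\<lambda>y. \<Sum>i<n. (lazy_op ^^ i) g y / 2)"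
    by (intro L2_sum, use L2_lin_comb[OF L2_lazy_pow[OF g] L2_const, where a = "1/2" and b = 0] in simp)
  have "l * inner_L2 (\<lambda>x. g x - ?s x) (\<lambda>x. g x - ?s x) \<le> dirichlet_form (\<lambda>x. g x - ?s x) (\<lambda>x. g x - ?s x)"
    by (rule Poincare_on_range_neg_laplacian[OF \<open>0 \<le> l\<close> bound k L2_diff[OF g s]
          AE_neg_laplacian_lazy_sum[OF g]])
  moreover have "inner_L2 (\<lambda>x. g x - ?s x) (\<lambda>x. g x - ?s x)
      = lazy_corr g 0 - 2 * lazy_corr g n + lazy_corr g (2 * n)"
    using inner_L2_lazy_pow_diff[OF g, of 0 n] by simp
  moreover have "dirichlet_form g ?s = 2 * (lazy_corr g n - lazy_corr g (Suc n))"
    using dirichlet_form_lazy_pow[OF g, of 0 n] by simp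
  moreover have "dirichlet_form ?s ?s = 2 * (lazy_corr g (2 * n) - lazy_corr g (Suc (2 * n)))"
    using dirichlet_form_lazy_pow[OF g, of n n] by (simp only: mult_2)
  ultimately show ?thesis using dirichlet_form_diff_self[OF g s] by simp
qed

lemma Poincare_if_laplacian_bound:
  assumes erg: "ergodic m \<nu>" and "0 \<le> l"
    and bound: "\<And>h. L2 \<nu> h \<Longrightarrow> l * H_m m \<nu> h \<le> (\<integral>x. (laplacian_m m h x)\<^sup>2 \<partial>\<nu>)"
    and f: "L2 \<nu> f"
  shows "l * Var_nu \<nu> f \<le> H_m m \<nu> f"
proof -
  define g where "g = (\<lambda>x. f x - (\<integral>y. f y \<partial>\<nu>))"
  have g: "L2 \<nu> g" unfolding g_def by (rule L2_diff[OF f L2_const])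
  have "(\<integral>x. g x \<partial>\<nu>) = 0"
    using L2_integrable[OF f] L2_integrable[OF L2_const] prob_space.prob_space[OF prob_space_nu]
    by (simp add: g_def)
  then have corr_lim: "lazy_corr g \<longlonglongrightarrow> 0" by (rule lazy_corr_tendsto_0[OF erg g])
  have "(\<lambda>n. l * (lazy_corr g 0 - 2 * lazy_corr g n + lazy_corr g (2 * n)))
      \<longlonglongrightarrow> l * (lazy_corr g 0 - 2 * 0 + 0)"
    using LIMSEQ_subseq_LIMSEQ[OF corr_lim, of "\<lambda>n. 2 * n"]
    by (intro tendsto_intros corr_lim) (simp_all add: strict_mono_def comp_def)
  moreover have "(\<lambda>n. dirichlet_form g g - 4 * (lazy_corr g n - lazy_corr g (Suc n))
      + 2 * (lazy_corr g (2 * n) - lazy_corr g (Suc (2 * n))))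
      \<longlonglongrightarrow> dirichlet_form g g - 4 * (0 - 0) + 2 * (0 - 0)"
    using LIMSEQ_subseq_LIMSEQ[OF corr_lim, of "\<lambda>n. 2 * n"]
      LIMSEQ_subseq_LIMSEQ[OF corr_lim, of "\<lambda>n. Suc (2 * n)"]
    by (intro tendsto_intros corr_lim LIMSEQ_Suc) (simp_all add: strict_mono_def comp_def)
  ultimately have "l * (lazy_corr g 0 - 2 * 0 + 0) \<le> dirichlet_form g g - 4 * (0 - 0) + 2 * (0 - 0)"
    by (rule LIMSEQ_le) (use Poincare_bound_lazy_corr[OF \<open>0 \<le> l\<close> bound g] in blast)
  moreover have "Var_nu \<nu> f = lazy_corr g 0" by (simp add: Var_nu_eq_inner_L2 lazy_corr_def g_def)
  moreover have "H_m m \<nu> f = dirichlet_form g g"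
    using H_m_eq_dirichlet_form[OF g] by (simp add: H_m_def g_def)
  ultimately show ?thesis by simp
qed

lemma Poincare_iff_laplacian_bound:
  assumes "ergodic m \<nu>" and "0 \<le> l"
  shows "(\<forall>f. L2 \<nu> f \<longrightarrow> l * Var_nu \<nu> f \<le> H_m m \<nu> f)
    \<longleftrightarrow> (\<forall>f. L2 \<nu> f \<longrightarrow> l * H_m m \<nu> f \<le> (\<integral>x. (laplacian_m m f x)\<^sup>2 \<partial>\<nu>))"
  using laplacian_bound_if_Poincare[OF \<open>0 \<le> l\<close>] Poincare_if_laplacian_bound[OF assms] by blast

lemma ereal_le_gap_iff: "ereal l \<le> gap m \<nu> \<longleftrightarrow> (\<forall>f. L2 \<nu> f \<longrightarrow> l * Var_nu \<nu> f \<le> H_m m \<nu> f)"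
proof -
  have Var_nonneg: "0 \<le> Var_nu \<nu> f" for f by (simp add: Var_nu_def)
  have "ereal l \<le> ereal (H_m m \<nu> f / Var_nu \<nu> f) \<longleftrightarrow> l * Var_nu \<nu> f \<le> H_m m \<nu> f"
    if "Var_nu \<nu> f \<noteq> 0" for f
    using that Var_nonneg[of f] by (simp add: pos_le_divide_eq)
  moreover have "l * Var_nu \<nu> f \<le> H_m m \<nu> f" if "L2 \<nu> f" "Var_nu \<nu> f = 0" for f
    using that by (simp add: H_m_eq_dirichlet_form dirichlet_form_self_nonneg)
  ultimately show ?thesis unfolding gap_def le_Inf_iff by blast
qed

lemma gap_nonneg: "0 \<le> gap m \<nu>"
  using ereal_le_gap_iff[of 0] by (simp add: H_m_eq_dirichlet_form dirichlet_form_self_nonneg zero_ereal_def)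

end

theorem theorem3p17:
  fixes m :: "'a::polish_space \<Rightarrow> 'a measure" and \<nu> :: "'a measure"
  assumes "mrw_space m"
    and "prob_space \<nu>"
    and "invariant_measure m \<nu>"
    and "reversible_measure m \<nu>"
    and "ergodic m \<nu>"
  shows "gap m \<nu> = Sup {ereal l | l. l \<ge> 0 \<and>
           (\<forall>f. L2 \<nu> f \<longrightarrow> l * H_m m \<nu> f \<le> (\<integral>x. (laplacian_m m f x)^2 \<partial>\<nu>))}"
proof -
  interpret reversible_random_walk m \<nu> by (intro reversible_random_walk.intro assms(1-4))
  have "{ereal l | l. l \<ge> 0 \<and> (\<forall>f. L2 \<nu> f \<longrightarrow> l * H_m m \<nu> f \<le> (\<integral>x. (laplacian_m m f x)^2 \<partial>\<nu>))}
      = {ereal l | l. 0 \<le> l \<and> ereal l \<le> gap m \<nu>}"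
    using Poincare_iff_laplacian_bound[OF assms(5)] ereal_le_gap_iff by blast
  then show ?thesis using Sup_nonneg_reals_le[OF gap_nonneg] by simp
qed

end
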